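(* Let $l_1,\dots,l_r\in\mathbb{Z}_{\ge0}$, $x_1,\dots,x_r\in\mathbb Q(q)$, and let $\epsilon'=\epsilon_{M|0}=(0,\dots,0)$ ($M$ zeros). If $M$ is sufficiently large and the $\mathcal U(\epsilon')$-module $\mathcal W_{l_1,\epsilon'}(x_1)\otimes\cdots\otimes\mathcal W_{l_r,\epsilon'}(x_r)$ is irreducible, then the $\mathcal U(\epsilon)$-module $\mathcal W_{l_1,\epsilon}(x_1)\otimes\cdots\otimes\mathcal W_{l_r,\epsilon}(x_r)$ is also irreducible.
   Context: Fix $n\ge4$ and $\epsilon\in\{0,1\}^n$ with $M$ zeros. For $\epsilon^\ast\in\{0,1\}^k$: $\mathbb I=\{1,\dots,k\}$, $I=\{0,\dots,k-1\}$ (indices mod $k$, $0$ identified with $k$), $\alpha_i=\delta_i-\delta_{i+1}$, $\langle\alpha_i,\delta_j^\vee\rangle$ the coefficient of $\delta_j$ in $\alpha_i$, $I_{\rm even}=\{i:\epsilon^\ast_i=\epsilon^\ast_{i+1}\}$, $I_{\rm odd}=I\setminus I_{\rm even}$, $[k]=(q^k-q^{-k})/(q-q^{-1})$, $q_j=q$ if $\epsilon^\ast_j=0$, $q_j=-q^{-1}$ if $\epsilon^\ast_j=1$. $\mathcal U(\epsilon^\ast)$ is generated over $\mathbb Q(q)$ by pairwise commuting invertible $\omega_j$ ($j\in\mathbb I$) and $e_i,f_i$ ($i\in I$) with relations $\omega_je_i\omega_j^{-1}=q_j^{\langle\alpha_i,\delta_j^\vee\rangle}e_i$, $\omega_jf_i\omega_j^{-1}=q_j^{-\langle\alpha_i,\delta_j^\vee\rangle}f_i$,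 $e_if_j-f_je_i=\delta_{ij}(k_i-k_i^{-1})/(q-q^{-1})$ ($k_i=\omega_i\omega_{i+1}^{-1}$), $e_i^2=f_i^2=0$ ($i\in I_{\rm odd}$), commutation of $e_i,e_j$ (and $f_i,f_j$) for non-adjacent $i\ne j$, $e_i^2e_j-(-1)^{\epsilon^\ast_i}[2]e_ie_je_i+e_je_i^2=0$ (and for $f$) for $i\in I_{\rm even}$, $j=i\pm1$, and for $i\in I_{\rm odd}$: $e_ie_{i-1}e_ie_{i+1}-e_ie_{i+1}e_ie_{i-1}+e_{i+1}e_ie_{i-1}e_i-e_{i-1}e_ie_{i+1}e_i+(-1)^{\epsilon^\ast_i}[2]e_ie_{i-1}e_{i+1}e_i=0$ (and for $f$). For $\epsilon^\ast=(0,\dots,0)$ this is the quantum affine algebra $U_q(A^{(1)}_{k-1})$. Tensor products use $\Delta(\omega_j)=\omega_j\otimes\omega_j$, $\Delta(e_i)=e_i\otimes1+k_i^{-1}\otimes e_i$, $\Delta(f_i)=f_i\otimes k_i+1\otimes f_i$. $\mathcal W_{s,\epsilon^\ast}(x)$ has basis $|\mathbf m\rangle$, $\mathbf m=(m_1,\dots,m_k)$ with $m_i\in\mathbb Z_{\ge0}$ ($\epsilon^\ast_i=0$), $m_i\in\{0,1\}$ ($\epsilon^\ast_i=1$), $\sum m_i=s$, and $e_i|\mathbf m\rangle=x^{\delta_{i0}}q^{m_{i+1}-m_i-1}[m_{i+1}]|\mathbf m+\mathbf e_i-\mathbf e_{i+1}\rangle$, $f_i|\mathbf m\rangle=x^{-\delta_{i0}}q^{m_i-m_{i+1}-1}[m_i]|\mathbf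 m-\mathbf e_i+\mathbf e_{i+1}\rangle$ (zero if the new vector is not allowed), $\omega_j|\mathbf m\rangle=q_j^{m_j}|\mathbf m\rangle$ ($\mathbf e_0=\mathbf e_k$). *)

theory Defs
  imports "HOL-Computational_Algebra.Polynomial" "HOL-Computational_Algebra.Fraction_Field"
begin

type_synonym K = "rat poly fract"

definition qq :: K where "qq = Fract [:0, 1:] 1"

definition qint :: "int \<Rightarrow> K" where
  "qint k = (qq powi k - qq powi (- k)) / (qq - inverse qq)"

text \<open>A parity sequence eps* of length k is a list with entries in {0,1};
  eps*_j = eps ! (j - 1) for j in {1..k}.  q_j = q if eps*_j = 0, q_j = -q^-1 otherwise.\<close>
definition qpar :: "nat list \<Rightarrow> nat \<Rightarrow> K" where
  "qpar eps j = (if eps ! (j - 1) = 0 then qq else - inverse qq)"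

definition nzeros :: "nat list \<Rightarrow> nat" where
  "nzeros eps = length (filter (\<lambda>a. a = 0) eps)"

text \<open>Basis of W_{s,eps*}(x): tuples m = (m_1..m_k), stored as nat functions vanishing outside {1..k}.\<close>
definition basisW :: "nat list \<Rightarrow> nat \<Rightarrow> (nat \<Rightarrow> nat) set" where
  "basisW eps s = {m. (\<forall>j. m j \<noteq> 0 \<longrightarrow> j \<in> {1..length eps})
                     \<and> (\<forall>j\<in>{1..length eps}. eps ! (j - 1) = 1 \<longrightarrow> m j \<le> 1)
                     \<and> (\<Sum>j=1..length eps. m j) = s}"

text \<open>Generators of U(eps*): e_i, f_i (i in {0..k-1}), omega_j and omega_j^-1 (j in {1..k}).\<close>
datatype gen = E nat | F nat | W nat | Winv nat

definition valid_gen :: "nat \<Rightarrow> gen \<Rightarrow> bool" where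
  "valid_gen k g = (case g of E i \<Rightarrow> i < k | F i \<Rightarrow> i < k
                    | W j \<Rightarrow> j \<in> {1..k} | Winv j \<Rightarrow> j \<in> {1..k})"

text \<open>For i in {0..k-1}: alpha_i = delta_a - delta_b with a = i (0 identified with k), b = i+1.\<close>
definition ia :: "nat \<Rightarrow> nat \<Rightarrow> nat" where "ia k i = (if i = 0 then k else i)"

text \<open>Matrix entry: coefficient of |m'> in g |m> in W_{s,eps}(x).\<close>
definition ent1 :: "nat list \<Rightarrow> K \<Rightarrow> nat \<Rightarrow> gen \<Rightarrow> (nat \<Rightarrow> nat) \<Rightarrow> (nat \<Rightarrow> nat) \<Rightarrow> K" where
  "ent1 eps x s g m' m =
    (case g of
      E i \<Rightarrow> (let a = ia (length eps) i; b = Suc i in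
        if 0 < m b \<and> m' = m(a := m a + 1, b := m b - 1) \<and> m' \<in> basisW eps s
        then (if i = 0 then x else 1) * qq powi (int (m b) - int (m a) - 1) * qint (int (m b))
        else 0)
    | F i \<Rightarrow> (let a = ia (length eps) i; b = Suc i in
        if 0 < m a \<and> m' = m(a := m a - 1, b := m b + 1) \<and> m' \<in> basisW eps s
        then (if i = 0 then inverse x else 1) * qq powi (int (m a) - int (m b) - 1) * qint (int (m a))
        else 0)
    | W j \<Rightarrow> (if m' = m then qpar eps j ^ m j else 0)
    | Winv j \<Rightarrow> (if m' = m then inverse (qpar eps j ^ m j) else 0))"

text \<open>Eigenvalue of k_i = omega_a omega_b^-1 on |m>.\<close>
definition kval :: "nat list \<Rightarrow> nat \<Rightarrow> (nat \<Rightarrow> nat) \<Rightarrow> K" where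
  "kval eps i m = (let a = ia (length eps) i; b = Suc i in
                    qpar eps a ^ m a * inverse (qpar eps b ^ m b))"

text \<open>Basis of W_{l_1,eps}(x_1) (x) ... (x) W_{l_r,eps}(x_r): lists of basis vectors.\<close>
definition TB :: "nat list \<Rightarrow> nat list \<Rightarrow> (nat \<Rightarrow> nat) list set" where
  "TB eps ls = {bs. length bs = length ls \<and> (\<forall>p<length ls. bs ! p \<in> basisW eps (ls ! p))}"

text \<open>Matrix entries of generators on the tensor product, via the iterated coproduct
  Delta(e_i) = e_i (x) 1 + k_i^-1 (x) e_i, Delta(f_i) = f_i (x) k_i + 1 (x) f_i,
  Delta(omega_j) = omega_j (x) omega_j.\<close>
definition entT :: "nat list \<Rightarrow> K list \<Rightarrow> nat list \<Rightarrow> gen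
                      \<Rightarrow> (nat \<Rightarrow> nat) list \<Rightarrow> (nat \<Rightarrow> nat) list \<Rightarrow> K" where
  "entT eps xs ls g b' b =
    (let r = length ls in
     case g of
      E i \<Rightarrow> (\<Sum>p<r. if (\<forall>t<r. t \<noteq> p \<longrightarrow> b' ! t = b ! t)
               then (\<Prod>t<p. inverse (kval eps i (b ! t))) * ent1 eps (xs ! p) (ls ! p) (E i) (b' ! p) (b ! p)
               else 0)
    | F i \<Rightarrow> (\<Sum>p<r. if (\<forall>t<r. t \<noteq> p \<longrightarrow> b' ! t = b ! t)
               then ent1 eps (xs ! p) (ls ! p) (F i) (b' ! p) (b ! p) * (\<Prod>t\<in>{p<..<r}. kval eps i (b ! t))
               else 0)
    | W j \<Rightarrow> (if b' = b then (\<Prod>t<r. qpar eps j ^ ((b ! t) j)) else 0)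
    | Winv j \<Rightarrow> (if b' = b then inverse (\<Prod>t<r. qpar eps j ^ ((b ! t) j)) else 0))"

definition vecs :: "nat list \<Rightarrow> nat list \<Rightarrow> ((nat \<Rightarrow> nat) list \<Rightarrow> K) set" where
  "vecs eps ls = {v. \<forall>b. b \<notin> TB eps ls \<longrightarrow> v b = 0}"

definition act :: "nat list \<Rightarrow> K list \<Rightarrow> nat list \<Rightarrow> gen
                    \<Rightarrow> ((nat \<Rightarrow> nat) list \<Rightarrow> K) \<Rightarrow> ((nat \<Rightarrow> nat) list \<Rightarrow> K)" where
  "act eps xs ls g v = (\<lambda>b'. if b' \<in> TB eps ls then (\<Sum>b\<in>TB eps ls. entT eps xs ls g b' b * v b) else 0)"

definition submoduleT :: "nat list \<Rightarrow> K list \<Rightarrow> nat list \<Rightarrow> ((nat \<Rightarrow> nat) list \<Rightarrow> K) set \<Rightarrow> bool" where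
  "submoduleT eps xs ls U \<longleftrightarrow>
     U \<subseteq> vecs eps ls \<and> (\<lambda>_. 0) \<in> U
     \<and> (\<forall>u\<in>U. \<forall>v\<in>U. (\<lambda>b. u b + v b) \<in> U)
     \<and> (\<forall>c u. u \<in> U \<longrightarrow> (\<lambda>b. c * u b) \<in> U)
     \<and> (\<forall>g u. valid_gen (length eps) g \<longrightarrow> u \<in> U \<longrightarrow> act eps xs ls g u \<in> U)"

definition irreducibleT :: "nat list \<Rightarrow> K list \<Rightarrow> nat list \<Rightarrow> bool" where
  "irreducibleT eps xs ls \<longleftrightarrow>
     vecs eps ls \<noteq> {\<lambda>_. 0}
     \<and> (\<forall>U. submoduleT eps xs ls U \<longrightarrow> U = {\<lambda>_. 0} \<or> U = vecs eps ls)"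

end

theory Submission
  imports Defs
begin

text \<open>
  Let c_1 < ... < c_M be the positions where eps is 0.  Putting the tokens of a
  basis vector of W_{l,eps_{M|0}} on the positions c_j embeds the tensor basis of the purely
  even module into that of the eps-module.  On the image, e_j of U(eps_{M|0}) acts like the
  product of the e_i of U(eps) along the path from c_{j+1} down to c_j (cyclically for j = 0):
  in between lie only odd positions, which hold at most one token, so a token that enters one
  must move on.  The same holds for f_j, and the omega_j act diagonally.  Hence the preimage
  of a U(eps)-submodule U is a U(eps_{M|0})-submodule.

  If U is nonzero, the omega_j separate weights, so U contains a nonzero weight vector.
  Moving tokens one step at a time into empty neighbouring positions (which acts injectively)
  brings its weight to the one with a single token on each of the first l_1 + ... + l_r
  zeros; this needs M to be large.  Such a vector lies in the embedded copy, so by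
  irreducibility U contains the whole embedded copy, and reversing the moves produces every
  basis vector.
\<close>

lemma qq_power: "qq ^ n = Fract (monom 1 n) 1"
  by (induction n) (simp_all add: qq_def mult_monom monom_Suc mult.commute One_fract_def monom_0 one_pCons)

lemma qq_nonzero [simp]: "qq \<noteq> 0"
  by (simp add: qq_def eq_fract Zero_fract_def)

lemma qq_power_eq_iff: "qq ^ a = qq ^ b \<longleftrightarrow> a = b"
  by (simp add: qq_power eq_fract monom_eq_iff')

lemma qq_power_int_eq_one_iff: "qq powi z = 1 \<longleftrightarrow> z = 0"
proof (cases z rule: int_cases)
  case (nonneg n)
  then show ?thesis using qq_power_eq_iff[of n 0] by simp
next
  case (neg n)
  have "qq powi z = inverse (qq ^ Suc n)"
    unfolding neg power_int_minus power_int_of_nat ..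
  moreover have "qq ^ Suc n \<noteq> 1" using qq_power_eq_iff[of "Suc n" 0] by simp
  ultimately have "qq powi z \<noteq> 1" by (metis inverse_1 inverse_inverse_eq)
  then show ?thesis using neg by simp
qed

lemma qq_power_int_eq_iff: "qq powi a = qq powi b \<longleftrightarrow> a = b"
proof
  assume "qq powi a = qq powi b"
  then have "qq powi (a - b) = 1" by (simp add: power_int_diff)
  then show "a = b" by (simp add: qq_power_int_eq_one_iff)
qed simp

lemma qq_minus_inverse_nonzero: "qq - inverse qq \<noteq> 0"
proof
  assume "qq - inverse qq = 0"
  then have "qq ^ 2 = qq ^ 0" by (simp add: field_simps power2_eq_square)
  then show False by (simp only: qq_power_eq_iff)
qed

lemma qint_nonzero: "k \<noteq> 0 \<Longrightarrow> qint k \<noteq> 0"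
  using qq_minus_inverse_nonzero qq_power_int_eq_iff[of k "- k"] by (simp add: qint_def)

lemma qint_1 [simp]: "qint 1 = 1"
  using qq_minus_inverse_nonzero by (simp add: qint_def power_int_minus)

lemma qpar_nonzero [simp]: "qpar eps j \<noteq> 0"
  by (simp add: qpar_def)

lemma qpar_power_eq_iff: "qpar eps j ^ a = qpar eps j ^ b \<longleftrightarrow> a = b"
proof
  assume h: "qpar eps j ^ a = qpar eps j ^ b"
  show "a = b"
  proof (cases "eps ! (j - 1) = 0")
    case True
    then show ?thesis using h by (simp add: qpar_def qq_power_eq_iff)
  next
    case False
    then have "((- inverse qq) ^ a) ^ 2 = ((- inverse qq) ^ b) ^ 2" using h by (simp add: qpar_def)
    then have "qq ^ (2 * a) = qq ^ (2 * b)"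
      by (simp add: power_mult[symmetric] power_mult_distrib power_inverse mult.commute)
    then show ?thesis by (simp add: qq_power_eq_iff)
  qed
qed simp

section \<open>Matrix coefficients of the Chevalley generators on the tensor basis\<close>

definition basis_vec :: "(nat \<Rightarrow> nat) list \<Rightarrow> (nat \<Rightarrow> nat) list \<Rightarrow> K" where
  "basis_vec b = (\<lambda>b'. if b' = b then 1 else 0)"

definition move_token :: "nat \<Rightarrow> nat \<Rightarrow> (nat \<Rightarrow> nat) \<Rightarrow> (nat \<Rightarrow> nat)" where
  "move_token s t m = m(s := m s - 1, t := m t + 1)"

text \<open>On a basis vector, e_i moves one token from position i+1 to position i (read as k
  when i = 0) and f_i moves one back.\<close>

fun gen_src :: "nat \<Rightarrow> gen \<Rightarrow> nat" where
  "gen_src k (E i) = Suc i" | "gen_src k (F i) = ia k i" | "gen_src k _ = 0"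

fun gen_tgt :: "nat \<Rightarrow> gen \<Rightarrow> nat" where
  "gen_tgt k (E i) = ia k i" | "gen_tgt k (F i) = Suc i" | "gen_tgt k _ = 0"

fun is_ef :: "nat \<Rightarrow> gen \<Rightarrow> bool" where
  "is_ef k (E i) = (i < k)" | "is_ef k (F i) = (i < k)" | "is_ef k _ = False"

fun loop_factor :: "gen \<Rightarrow> K \<Rightarrow> K" where
  "loop_factor (E i) x = (if i = 0 then x else 1)"
| "loop_factor (F i) x = (if i = 0 then inverse x else 1)"
| "loop_factor _ x = 1"

text \<open>The tensor factors that receive k_i^-1 (for e_i) or k_i (for f_i) in the iterated
  coproduct when the generator itself acts on factor p.\<close>

fun k_factors :: "nat \<Rightarrow> gen \<Rightarrow> nat \<Rightarrow> nat set" where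
  "k_factors r (E i) p = {..<p}" | "k_factors r (F i) p = {p<..<r}" | "k_factors r _ p = {}"

definition omega_eig :: "nat list \<Rightarrow> (nat \<Rightarrow> nat) \<Rightarrow> nat \<Rightarrow> K" where
  "omega_eig eps m c = qpar eps c ^ m c"

definition ef_coeff :: "nat list \<Rightarrow> K list \<Rightarrow> nat list \<Rightarrow> gen \<Rightarrow> nat \<Rightarrow> (nat \<Rightarrow> nat) list \<Rightarrow> K" where
  "ef_coeff eps xs ls g p b =
    (let k = length eps; s = gen_src k g; t = gen_tgt k g; m = b ! p in
     (\<Prod>u\<in>k_factors (length ls) g p. omega_eig eps (b ! u) s / omega_eig eps (b ! u) t)
     * (loop_factor g (xs ! p) * qq powi (int (m s) - int (m t) - 1) * qint (int (m s))))"

lemma gen_src_tgt_range: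
  assumes "is_ef k g" "2 \<le> k"
  shows "gen_src k g \<in> {1..k}" "gen_tgt k g \<in> {1..k}" "gen_src k g \<noteq> gen_tgt k g"
  using assms by (cases g; auto simp: ia_def)+

lemma k_factors_subset: "is_ef k g \<Longrightarrow> p < r \<Longrightarrow> k_factors r g p \<subseteq> {..<r} - {p}"
  by (cases g) auto

lemma is_ef_valid_gen: "is_ef k g \<Longrightarrow> valid_gen k g"
  by (cases g) (auto simp: valid_gen_def)

lemma omega_eig_0 [simp]: "m c = 0 \<Longrightarrow> omega_eig eps m c = 1"
  by (simp add: omega_eig_def)

lemma omega_eig_nonzero: "omega_eig eps m c \<noteq> 0"
  by (simp add: omega_eig_def)

lemma move_token_apply:
  "s \<noteq> t \<Longrightarrow> move_token s t m c = (if c = s then m s - 1 else if c = t then m t + 1 else m c)"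
  by (simp add: move_token_def)

lemma move_token_inj:
  assumes "s \<noteq> t" "0 < m s" "0 < m' s" "move_token s t m = move_token s t m'"
  shows "m = m'"
proof
  fix c
  have "move_token s t m c = move_token s t m' c" using assms(4) by simp
  then show "m c = m' c" using assms(1-3) by (auto simp: move_token_apply split: if_splits)
qed

lemma move_token_back: "s \<noteq> t \<Longrightarrow> 0 < m s \<Longrightarrow> move_token t s (move_token s t m) = m"
  by (auto simp: fun_eq_iff move_token_apply)

lemma move_token_trans:
  "s \<noteq> t \<Longrightarrow> t \<noteq> u \<Longrightarrow> s \<noteq> u \<Longrightarrow> 0 < m s
    \<Longrightarrow> move_token t u (move_token s t m) = move_token s u m"
  by (auto simp: fun_eq_iff move_token_apply)

lemma move_token_twice:
  assumes p: "p < length b" and st: "s \<noteq> t" and td: "t \<noteq> d" and sd: "s \<noteq> d"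
    and bps: "0 < (b ! p) s"
  defines "b1 \<equiv> b[p := move_token s t (b ! p)]"
  shows "\<And>u. u \<noteq> p \<Longrightarrow> b1 ! u = b ! u" and "(b1 ! p) d = (b ! p) d"
    and "b1[p := move_token t d (b1 ! p)] = b[p := move_token s d (b ! p)]"
  using p st td sd move_token_trans[where m = "b ! p", OF st td sd bps]
  by (simp_all add: b1_def move_token_apply)

lemma move_token_basisW:
  assumes m: "m \<in> basisW eps n" and s: "0 < m s" and st: "s \<noteq> t" and t: "t \<in> {1..length eps}"
    and t1: "eps ! (t - 1) = 1 \<Longrightarrow> m t = 0"
  shows "move_token s t m \<in> basisW eps n"
proof -
  let ?A = "{1..length eps}"
  have sA: "s \<in> ?A" using m s by (auto simp: basisW_def)
  have split: "sum f ?A = f s + f t + sum f (?A - {s} - {t})" for f :: "nat \<Rightarrow> nat"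
  proof -
    have "sum f ?A = f s + sum f (?A - {s})" using sA by (simp add: sum.remove)
    also have "sum f (?A - {s}) = f t + sum f (?A - {s} - {t})" using t st by (simp add: sum.remove)
    finally show ?thesis by simp
  qed
  have "sum (move_token s t m) (?A - {s} - {t}) = sum m (?A - {s} - {t})"
    by (intro sum.cong) (auto simp: move_token_def)
  then have "sum (move_token s t m) ?A = sum m ?A"
    unfolding split[of "move_token s t m"] split[of m] using s st by (simp add: move_token_apply)
  then show ?thesis using m sA t t1 st by (auto simp: basisW_def move_token_def)
qed

lemma finite_basisW: "finite (basisW eps s)"
proof -
  let ?I = "{1..length eps}"
  have "basisW eps s \<subseteq> {f. \<forall>x. (x \<in> ?I \<longrightarrow> f x \<in> {0..s}) \<and> (x \<notin> ?I \<longrightarrow> f x = 0)}"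
  proof safe
    fix f x assume f: "f \<in> basisW eps s" and x: "x \<in> ?I"
    have "f x \<le> (\<Sum>j\<in>?I. f j)" using x by (intro member_le_sum) auto
    then show "f x \<in> {0..s}" using f by (simp add: basisW_def)
  qed (auto simp: basisW_def)
  then show ?thesis by (rule finite_subset) (intro finite_set_of_finite_funs; simp)
qed

lemma finite_TB: "finite (TB eps ls)"
proof -
  let ?A = "\<Union>p<length ls. basisW eps (ls ! p)"
  have "TB eps ls \<subseteq> {bs. set bs \<subseteq> ?A \<and> length bs = length ls}"
    by (fastforce simp: TB_def in_set_conv_nth)
  moreover have "finite ?A" using finite_basisW by blast
  ultimately show ?thesis using finite_lists_length_eq finite_subset by blast
qed

lemma TB_length: "b \<in> TB eps ls \<Longrightarrow> length b = length ls"
  by (simp add: TB_def)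

lemma TB_list_update:
  "b \<in> TB eps ls \<Longrightarrow> p < length ls \<Longrightarrow> m \<in> basisW eps (ls ! p) \<Longrightarrow> b[p := m] \<in> TB eps ls"
  by (auto simp: TB_def nth_list_update)

lemma act_basis_vec:
  assumes "b \<in> TB eps ls"
  shows "act eps xs ls g (basis_vec b) b' = (if b' \<in> TB eps ls then entT eps xs ls g b' b else 0)"
  using assms finite_TB by (simp add: act_def basis_vec_def if_distrib sum.delta cong: if_cong)

lemma ent1_ef:
  assumes "2 \<le> length eps" "is_ef (length eps) g"
  defines "s \<equiv> gen_src (length eps) g" and "t \<equiv> gen_tgt (length eps) g"
  shows "ent1 eps x n g m' m =
    (if 0 < m s \<and> m' = move_token s t m \<and> m' \<in> basisW eps n
     then loop_factor g x * qq powi (int (m s) - int (m t) - 1) * qint (int (m s)) else 0)"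
proof -
  have "ia (length eps) i \<noteq> Suc i" for i using assms(1) by (simp add: ia_def)
  then show ?thesis using assms(2) unfolding s_def t_def
    by (cases g) (auto simp: ent1_def Let_def move_token_def fun_upd_twist)
qed

lemma entT_ef_factors:
  assumes "is_ef (length eps) g"
  shows "entT eps xs ls g b' b =
    (\<Sum>p<length ls. if \<forall>u<length ls. u \<noteq> p \<longrightarrow> b' ! u = b ! u
       then (\<Prod>u\<in>k_factors (length ls) g p.
               omega_eig eps (b ! u) (gen_src (length eps) g) / omega_eig eps (b ! u) (gen_tgt (length eps) g))
            * ent1 eps (xs ! p) (ls ! p) g (b' ! p) (b ! p)
       else 0)"
proof (cases g)
  case (E i)
  have prods: "(\<Prod>u<p. inverse (kval eps i (b ! u)))
      = (\<Prod>u<p. omega_eig eps (b ! u) (Suc i) / omega_eig eps (b ! u) (ia (length eps) i))" for p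
    by (intro prod.cong) (simp_all add: kval_def omega_eig_def Let_def divide_inverse mult.commute)
  show ?thesis unfolding E entT_def Let_def gen.case prods k_factors.simps gen_src.simps gen_tgt.simps ..
next
  case (F i)
  have prods: "(\<Prod>u\<in>{p<..<length ls}. kval eps i (b ! u))
      = (\<Prod>u\<in>{p<..<length ls}. omega_eig eps (b ! u) (ia (length eps) i) / omega_eig eps (b ! u) (Suc i))" for p
    by (intro prod.cong) (simp_all add: kval_def omega_eig_def Let_def divide_inverse)
  show ?thesis unfolding F entT_def Let_def gen.case prods k_factors.simps gen_src.simps gen_tgt.simps
      mult.commute[of "ent1 _ _ _ _ _ _"] ..
qed (use assms(1) in auto)

lemma entT_ef:
  assumes b: "b \<in> TB eps ls" and b': "b' \<in> TB eps ls" and k: "2 \<le> length eps"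
    and g: "is_ef (length eps) g"
  defines "s \<equiv> gen_src (length eps) g" and "t \<equiv> gen_tgt (length eps) g"
  shows "entT eps xs ls g b' b =
    (\<Sum>p<length ls. if 0 < (b ! p) s \<and> move_token s t (b ! p) \<in> basisW eps (ls ! p)
        \<and> b' = b[p := move_token s t (b ! p)]
      then ef_coeff eps xs ls g p b else 0)"
  unfolding entT_ef_factors[OF g]
proof (intro sum.cong refl)
  fix p assume "p \<in> {..<length ls}"
  then have "(\<forall>u<length ls. u \<noteq> p \<longrightarrow> b' ! u = b ! u) \<and> b' ! p = move_token s t (b ! p)
      \<longleftrightarrow> b' = b[p := move_token s t (b ! p)]"
    using TB_length[OF b] TB_length[OF b'] by (auto simp: list_eq_iff_nth_eq nth_list_update)
  then show "(if \<forall>u<length ls. u \<noteq> p \<longrightarrow> b' ! u = b ! u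
       then (\<Prod>u\<in>k_factors (length ls) g p. omega_eig eps (b ! u) (gen_src (length eps) g)
               / omega_eig eps (b ! u) (gen_tgt (length eps) g))
            * ent1 eps (xs ! p) (ls ! p) g (b' ! p) (b ! p) else 0)
    = (if 0 < (b ! p) s \<and> move_token s t (b ! p) \<in> basisW eps (ls ! p)
        \<and> b' = b[p := move_token s t (b ! p)] then ef_coeff eps xs ls g p b else 0)"
    unfolding ent1_ef[OF k g] ef_coeff_def Let_def s_def t_def by auto
qed

lemma act_ef_basis_vec:
  assumes b: "b \<in> TB eps ls" and k: "2 \<le> length eps" and g: "is_ef (length eps) g"
  defines "s \<equiv> gen_src (length eps) g" and "t \<equiv> gen_tgt (length eps) g"
  shows "act eps xs ls g (basis_vec b) b' =
    (\<Sum>p<length ls. if 0 < (b ! p) s \<and> move_token s t (b ! p) \<in> basisW eps (ls ! p)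
        \<and> b' = b[p := move_token s t (b ! p)]
      then ef_coeff eps xs ls g p b else 0)"
proof (cases "b' \<in> TB eps ls")
  case True
  then show ?thesis unfolding act_basis_vec[OF b] s_def t_def using entT_ef[OF b True k g] by simp
next
  case False
  then show ?thesis unfolding act_basis_vec[OF b] using TB_list_update[OF b] by (auto intro!: sum.neutral)
qed

lemma act_in_vecs: "act eps xs ls g v \<in> vecs eps ls"
  by (simp add: act_def vecs_def)

lemma act_lincomb:
  "finite P \<Longrightarrow> act eps xs ls g (\<lambda>b. \<Sum>q\<in>P. c q * f q b) = (\<lambda>b'. \<Sum>q\<in>P. c q * act eps xs ls g (f q) b')"
  unfolding act_def
  by (auto simp: sum_distrib_left sum_distrib_right mult.assoc mult.left_commute intro!: ext sum.swap)

lemma act_expand: "act eps xs ls g v = (\<lambda>b'. \<Sum>b\<in>TB eps ls. v b * act eps xs ls g (basis_vec b) b')"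
proof
  fix b'
  have "act eps xs ls g (basis_vec b) b' = (if b' \<in> TB eps ls then entT eps xs ls g b' b else 0)"
    if "b \<in> TB eps ls" for b
    using act_basis_vec[OF that] .
  then show "act eps xs ls g v b' = (\<Sum>b\<in>TB eps ls. v b * act eps xs ls g (basis_vec b) b')"
    by (simp add: act_def mult.commute)
qed

lemma vecs_expand:
  assumes "v \<in> vecs eps ls"
  shows "v = (\<lambda>b'. \<Sum>b\<in>TB eps ls. v b * basis_vec b b')"
proof
  fix b'
  show "v b' = (\<Sum>b\<in>TB eps ls. v b * basis_vec b b')"
  proof (cases "b' \<in> TB eps ls")
    case True
    then show ?thesis using finite_TB by (simp add: basis_vec_def if_distrib sum.delta' cong: if_cong)
  next
    case False
    then show ?thesis using assms by (auto simp: vecs_def basis_vec_def intro!: sum.neutral)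
  qed
qed

definition act_word :: "nat list \<Rightarrow> K list \<Rightarrow> nat list \<Rightarrow> gen list
                         \<Rightarrow> ((nat \<Rightarrow> nat) list \<Rightarrow> K) \<Rightarrow> ((nat \<Rightarrow> nat) list \<Rightarrow> K)" where
  "act_word eps xs ls gs v = fold (act eps xs ls) gs v"

lemma act_word_Nil [simp]: "act_word eps xs ls [] v = v"
  by (simp add: act_word_def)

lemma act_word_Cons [simp]: "act_word eps xs ls (g # gs) v = act_word eps xs ls gs (act eps xs ls g v)"
  by (simp add: act_word_def)

lemma act_word_lincomb:
  "finite P \<Longrightarrow> act_word eps xs ls gs (\<lambda>b. \<Sum>q\<in>P. c q * f q b)
    = (\<lambda>b'. \<Sum>q\<in>P. c q * act_word eps xs ls gs (f q) b')"
proof (induction gs arbitrary: f)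
  case (Cons g gs)
  then show ?case using Cons.IH[of "\<lambda>q. act eps xs ls g (f q)"] by (simp add: act_lincomb)
qed simp

lemma act_word_scale:
  "act_word eps xs ls gs (\<lambda>b. c * f b) = (\<lambda>b'. c * act_word eps xs ls gs f b')"
  using act_word_lincomb[where P = "{()}" and c = "\<lambda>_. c" and f = "\<lambda>_. f"] by simp

lemma submoduleT_vecs: "submoduleT eps xs ls U \<Longrightarrow> u \<in> U \<Longrightarrow> u \<in> vecs eps ls"
  by (auto simp: submoduleT_def)

lemma submoduleT_zero: "submoduleT eps xs ls U \<Longrightarrow> (\<lambda>_. 0) \<in> U"
  by (simp add: submoduleT_def)

lemma submoduleT_add: "submoduleT eps xs ls U \<Longrightarrow> u \<in> U \<Longrightarrow> v \<in> U \<Longrightarrow> (\<lambda>b. u b + v b) \<in> U"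
  by (simp add: submoduleT_def)

lemma submoduleT_scale: "submoduleT eps xs ls U \<Longrightarrow> u \<in> U \<Longrightarrow> (\<lambda>b. c * u b) \<in> U"
  by (simp add: submoduleT_def)

lemma submoduleT_act:
  "submoduleT eps xs ls U \<Longrightarrow> u \<in> U \<Longrightarrow> valid_gen (length eps) g \<Longrightarrow> act eps xs ls g u \<in> U"
  by (simp add: submoduleT_def)

lemma submoduleT_act_word:
  "submoduleT eps xs ls U \<Longrightarrow> \<forall>g\<in>set gs. valid_gen (length eps) g \<Longrightarrow> u \<in> U
    \<Longrightarrow> act_word eps xs ls gs u \<in> U"
  by (induction gs arbitrary: u) (auto intro: submoduleT_act)

lemma submoduleT_lincomb:
  assumes U: "submoduleT eps xs ls U" and P: "finite P" and f: "\<forall>q\<in>P. f q \<in> U"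
  shows "(\<lambda>b. \<Sum>q\<in>P. c q * f q b) \<in> U"
  using P f
proof (induction P rule: finite_induct)
  case empty
  then show ?case using submoduleT_zero[OF U] by simp
next
  case (insert x P)
  then show ?case using submoduleT_add[OF U submoduleT_scale[OF U]] by simp
qed

lemma submoduleT_eq_vecsI:
  assumes U: "submoduleT eps xs ls U" and basis: "\<forall>b\<in>TB eps ls. basis_vec b \<in> U"
  shows "U = vecs eps ls"
proof
  show "U \<subseteq> vecs eps ls" using submoduleT_vecs[OF U] by blast
  show "vecs eps ls \<subseteq> U"
  proof
    fix v assume "v \<in> vecs eps ls"
    then show "v \<in> U" using submoduleT_lincomb[OF U finite_TB basis, of v] vecs_expand by simp
  qed
qed

fun is_path :: "nat \<Rightarrow> nat \<Rightarrow> gen list \<Rightarrow> bool" where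
  "is_path k c [] = True"
| "is_path k c (g # gs) = (is_ef k g \<and> gen_src k g = c \<and> is_path k (gen_tgt k g) gs)"

fun path_end :: "nat \<Rightarrow> nat \<Rightarrow> gen list \<Rightarrow> nat" where
  "path_end k c [] = c"
| "path_end k c (g # gs) = path_end k (gen_tgt k g) gs"

fun path_visits :: "nat \<Rightarrow> nat \<Rightarrow> gen list \<Rightarrow> nat list" where
  "path_visits k c [] = []"
| "path_visits k c (g # gs) = gen_tgt k g # path_visits k (gen_tgt k g) gs"

lemma is_path_append: "is_path k c (gs @ hs) = (is_path k c gs \<and> is_path k (path_end k c gs) hs)"
  by (induction gs arbitrary: c) auto

lemma path_end_append: "path_end k c (gs @ hs) = path_end k (path_end k c gs) hs"
  by (induction gs arbitrary: c) auto

lemma path_visits_append: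
  "path_visits k c (gs @ hs) = path_visits k c gs @ path_visits k (path_end k c gs) hs"
  by (induction gs arbitrary: c) auto

lemma is_path_valid_gen: "is_path k c gs \<Longrightarrow> \<forall>g\<in>set gs. valid_gen k g"
  by (induction gs arbitrary: c) (auto intro: is_ef_valid_gen)

section \<open>A token travelling through odd positions\<close>

locale parity_tensor =
  fixes eps :: "nat list" and xs :: "K list" and ls :: "nat list"
  assumes two_le_length: "2 \<le> length eps" and parities: "set eps \<subseteq> {0, 1}"
    and length_xs: "length xs = length ls" and xs_nonzero: "\<forall>x\<in>set xs. x \<noteq> 0"
begin

abbreviation "k \<equiv> length eps"
abbreviation "r \<equiv> length ls"

definition one_pos :: "nat \<Rightarrow> bool" where "one_pos c \<longleftrightarrow> c \<in> {1..k} \<and> eps ! (c - 1) = 1"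
definition zero_pos :: "nat \<Rightarrow> bool" where "zero_pos c \<longleftrightarrow> c \<in> {1..k} \<and> eps ! (c - 1) = 0"

lemma one_pos_or_zero_pos: "c \<in> {1..k} \<Longrightarrow> one_pos c \<or> zero_pos c"
proof -
  assume c: "c \<in> {1..k}"
  then have "eps ! (c - 1) \<in> set eps" by auto
  then show ?thesis using parities c by (auto simp: one_pos_def zero_pos_def)
qed

lemma zero_pos_not_one_pos: "zero_pos c \<Longrightarrow> \<not> one_pos c"
  by (simp add: one_pos_def zero_pos_def)

lemma ef_coeff_nonzero:
  assumes "p < r" "0 < (b ! p) (gen_src k g)"
  shows "ef_coeff eps xs ls g p b \<noteq> 0"
proof -
  have "xs ! p \<noteq> 0" using assms(1) length_xs xs_nonzero by auto
  then have "loop_factor g (xs ! p) \<noteq> 0" by (cases g) auto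
  moreover have "finite (k_factors r g p)" by (cases g) auto
  ultimately show ?thesis using assms(2) omega_eig_nonzero qint_nonzero
    by (simp add: ef_coeff_def Let_def prod_zero_iff power_int_eq_0_iff)
qed

lemma ef_coeff_single_token:
  assumes "(b ! p) (gen_src k g) = 1" and "\<forall>u\<in>k_factors r g p. (b ! u) (gen_src k g) = 0"
  shows "ef_coeff eps xs ls g p b = loop_factor g (xs ! p)
    * (\<Prod>u\<in>k_factors r g p. inverse (omega_eig eps (b ! u) (gen_tgt k g)))
    * qq powi (- int ((b ! p) (gen_tgt k g)))"
proof -
  have "(\<Prod>u\<in>k_factors r g p. omega_eig eps (b ! u) (gen_src k g) / omega_eig eps (b ! u) (gen_tgt k g))
      = (\<Prod>u\<in>k_factors r g p. inverse (omega_eig eps (b ! u) (gen_tgt k g)))"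
    using assms(2) by (intro prod.cong) (simp_all add: divide_inverse)
  then show ?thesis using assms(1) by (simp add: ef_coeff_def Let_def mult_ac)
qed

lemma act_ef_basis_vec_expand:
  assumes b: "b \<in> TB eps ls" and g: "is_ef k g"
    and mv: "\<And>p. p < r \<Longrightarrow> 0 < (b ! p) (gen_src k g)
      \<Longrightarrow> move_token (gen_src k g) (gen_tgt k g) (b ! p) \<in> basisW eps (ls ! p)"
  shows "act eps xs ls g (basis_vec b) = (\<lambda>b'. \<Sum>p<r.
    (if 0 < (b ! p) (gen_src k g) then ef_coeff eps xs ls g p b else 0)
    * basis_vec (b[p := move_token (gen_src k g) (gen_tgt k g) (b ! p)]) b')"
  unfolding act_ef_basis_vec[OF b two_le_length g]
  by (intro ext sum.cong refl) (use mv in \<open>auto simp: basis_vec_def\<close>)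

lemma act_ef_single_token:
  assumes b: "b \<in> TB eps ls" and g: "is_ef k g" and p: "p < r"
    and only_p: "\<And>p'. p' < r \<Longrightarrow> 0 < (b ! p') (gen_src k g) \<longleftrightarrow> p' = p"
    and mv: "move_token (gen_src k g) (gen_tgt k g) (b ! p) \<in> basisW eps (ls ! p)"
  shows "act eps xs ls g (basis_vec b)
    = (\<lambda>b'. ef_coeff eps xs ls g p b * basis_vec (b[p := move_token (gen_src k g) (gen_tgt k g) (b ! p)]) b')"
proof -
  have mv': "move_token (gen_src k g) (gen_tgt k g) (b ! p') \<in> basisW eps (ls ! p')"
    if "p' < r" "0 < (b ! p') (gen_src k g)" for p'
    using only_p[OF that(1)] that(2) mv by simp
  have "act eps xs ls g (basis_vec b) = (\<lambda>b'. \<Sum>p'<r.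
      (if 0 < (b ! p') (gen_src k g) then ef_coeff eps xs ls g p' b else 0)
      * basis_vec (b[p' := move_token (gen_src k g) (gen_tgt k g) (b ! p')]) b')"
    by (rule act_ef_basis_vec_expand[OF b g mv'])
  also have "\<dots> = (\<lambda>b'. \<Sum>p'<r. if p' = p then ef_coeff eps xs ls g p b
      * basis_vec (b[p := move_token (gen_src k g) (gen_tgt k g) (b ! p)]) b' else 0)"
    by (intro ext sum.cong refl) (use only_p in auto)
  finally show ?thesis using p by simp
qed

lemma act_token_from_one_pos:
  assumes g: "is_ef k g" and src: "gen_src k g = c" and b: "b \<in> TB eps ls" and p: "p < r"
    and c: "one_pos c" "(b ! p) c = 1"
    and others: "\<forall>u<r. \<forall>c'. one_pos c' \<and> (u \<noteq> p \<or> c' \<noteq> c) \<longrightarrow> (b ! u) c' = 0"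
  defines "t \<equiv> gen_tgt k g"
  shows "act eps xs ls g (basis_vec b) = (\<lambda>b'. loop_factor g (xs ! p)
      * (\<Prod>u\<in>k_factors r g p. inverse (omega_eig eps (b ! u) t)) * qq powi (- int ((b ! p) t))
      * basis_vec (b[p := move_token c t (b ! p)]) b')"
proof -
  have t: "t \<in> {1..k}" and ct: "c \<noteq> t" using gen_src_tgt_range[OF g two_le_length] src t_def by auto
  have mv: "move_token c t (b ! p) \<in> basisW eps (ls ! p)"
  proof (rule move_token_basisW)
    show "b ! p \<in> basisW eps (ls ! p)" using b p by (simp add: TB_def)
  qed (use c ct t others p in \<open>auto simp: one_pos_def\<close>)
  have only_p: "0 < (b ! p') c \<longleftrightarrow> p' = p" if "p' < r" for p'
    using c others that by (cases "p' = p") auto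
  have "\<forall>u\<in>k_factors r g p. (b ! u) c = 0"
    using k_factors_subset[OF g p] others c(1) by blast
  then show ?thesis
    using act_ef_single_token[OF b g p] ef_coeff_single_token[of b p g] only_p mv src c t_def
    by (simp add: mult_ac)
qed

lemma act_word_token_through_ones:
  assumes "is_path k c gs" and "\<forall>c'\<in>set (butlast (path_visits k c gs)). one_pos c'"
    and "path_end k c gs = d" and "zero_pos d"
    and "b \<in> TB eps ls" and "p < r" and "one_pos c" and "(b ! p) c = 1"
    and "\<forall>u<r. \<forall>c'. one_pos c' \<and> (u \<noteq> p \<or> c' \<noteq> c) \<longrightarrow> (b ! u) c' = 0"
    and "\<forall>g\<in>set gs. k_factors r g p = S"
  shows "act_word eps xs ls gs (basis_vec b) = (\<lambda>b'. (\<Prod>g\<leftarrow>gs. loop_factor g (xs ! p))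
      * (\<Prod>u\<in>S. inverse (omega_eig eps (b ! u) d)) * qq powi (- int ((b ! p) d))
      * basis_vec (b[p := move_token c d (b ! p)]) b')"
  using assms
proof (induction gs arbitrary: c b)
  case Nil
  then show ?case using zero_pos_not_one_pos by auto
next
  case (Cons g gs)
  define t where "t = gen_tgt k g"
  have g: "is_ef k g" and src: "gen_src k g = c" using Cons.prems(1) by auto
  have S: "S \<subseteq> {..<r} - {p}" using k_factors_subset[OF g Cons.prems(6)] Cons.prems(10) by auto
  note step = act_token_from_one_pos[OF g src Cons.prems(5,6,7,8,9), folded t_def]
  show ?case
  proof (cases "gs = []")
    case True
    then show ?thesis using step Cons.prems(3,10) t_def by simp
  next
    case False
    have ct: "c \<noteq> t" using gen_src_tgt_range[OF g two_le_length] src t_def by auto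
    have t_one: "one_pos t" using Cons.prems(2) False by (cases gs) (auto simp: t_def)
    have td: "t \<noteq> d" and cd: "c \<noteq> d" using t_one Cons.prems(4,7) zero_pos_not_one_pos by blast+
    let ?b1 = "b[p := move_token c t (b ! p)]"
    have "p < length b" "0 < (b ! p) c" using TB_length[OF Cons.prems(5)] Cons.prems(6,8) by simp_all
    note twice = move_token_twice[OF this(1) ct td cd this(2)]
    have t_empty: "(b ! u) t = 0" if "u < r" for u using Cons.prems(9) t_one ct that by blast
    have IH: "act_word eps xs ls gs (basis_vec ?b1) = (\<lambda>b'. (\<Prod>g\<leftarrow>gs. loop_factor g (xs ! p))
        * (\<Prod>u\<in>S. inverse (omega_eig eps (?b1 ! u) d)) * qq powi (- int ((?b1 ! p) d))
        * basis_vec (?b1[p := move_token t d (?b1 ! p)]) b')"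
    proof (rule Cons.IH)
      show "\<forall>u<r. \<forall>c'. one_pos c' \<and> (u \<noteq> p \<or> c' \<noteq> t) \<longrightarrow> (?b1 ! u) c' = 0"
      proof (intro allI impI)
        fix u c' assume "u < r" "one_pos c' \<and> (u \<noteq> p \<or> c' \<noteq> t)"
        then show "(?b1 ! u) c' = 0"
          using Cons.prems(6,8,9) TB_length[OF Cons.prems(5)] ct
          by (cases "u = p") (auto simp: move_token_apply)
      qed
      show "\<forall>c'\<in>set (butlast (path_visits k t gs)). one_pos c'"
        using Cons.prems(2) False by (cases gs) (auto simp: t_def)
      have "move_token c t (b ! p) \<in> basisW eps (ls ! p)"
      proof (rule move_token_basisW)
        show "b ! p \<in> basisW eps (ls ! p)" using Cons.prems(5,6) by (simp add: TB_def)
      qed (use Cons.prems(8) ct t_one t_empty Cons.prems(6) in \<open>auto simp: one_pos_def\<close>)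
      then show "?b1 \<in> TB eps ls" using TB_list_update[OF Cons.prems(5,6)] by blast
    qed (use Cons.prems t_one t_empty ct t_def TB_length in \<open>auto simp: move_token_apply\<close>)
    have "(\<Prod>u\<in>S. inverse (omega_eig eps (?b1 ! u) d)) = (\<Prod>u\<in>S. inverse (omega_eig eps (b ! u) d))"
      using S twice(1) by (intro prod.cong refl) (metis Diff_iff insertI1 subsetD)
    moreover have "(\<Prod>u\<in>S. inverse (omega_eig eps (b ! u) t)) = 1"
      using S t_empty by (intro prod.neutral) auto
    ultimately show ?thesis
      using step IH twice(2,3) Cons.prems(6,8,10) t_empty by (simp add: act_word_scale mult_ac)
  qed
qed

lemma single_token_after_move:
  assumes b: "b \<in> TB eps ls" and p: "p < r" and bps: "0 < (b ! p) s" and s: "zero_pos s"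
    and t: "one_pos t" and no_ones: "\<forall>u<r. \<forall>c. one_pos c \<longrightarrow> (b ! u) c = 0"
  defines "b1 \<equiv> b[p := move_token s t (b ! p)]"
  shows "b1 \<in> TB eps ls" and "(b1 ! p) t = 1"
    and "\<forall>u<r. \<forall>c. one_pos c \<and> (u \<noteq> p \<or> c \<noteq> t) \<longrightarrow> (b1 ! u) c = 0"
proof -
  have st: "s \<noteq> t" using s t zero_pos_not_one_pos by blast
  have "move_token s t (b ! p) \<in> basisW eps (ls ! p)"
  proof (rule move_token_basisW[where m = "b ! p" and s = s and t = t])
    show "b ! p \<in> basisW eps (ls ! p)" using b p by (simp add: TB_def)
  qed (use t no_ones p bps st in \<open>auto simp: one_pos_def\<close>)
  then show "b1 \<in> TB eps ls" unfolding b1_def using TB_list_update[OF b p] by blast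
  show "(b1 ! p) t = 1" using no_ones t p st TB_length[OF b] by (simp add: b1_def move_token_apply)
  show "\<forall>u<r. \<forall>c. one_pos c \<and> (u \<noteq> p \<or> c \<noteq> t) \<longrightarrow> (b1 ! u) c = 0"
  proof (intro allI impI)
    fix u c assume "u < r" "one_pos c \<and> (u \<noteq> p \<or> c \<noteq> t)"
    moreover have "c \<noteq> s" if "one_pos c" using that s zero_pos_not_one_pos by blast
    ultimately show "(b1 ! u) c = 0"
      using no_ones st p TB_length[OF b] by (cases "u = p") (auto simp: b1_def move_token_apply)
  qed
qed

lemma act_word_token_from_zero:
  assumes path: "is_path k s (g # gs)" and ne: "gs \<noteq> []"
    and ones: "\<forall>c\<in>set (butlast (path_visits k s (g # gs))). one_pos c"
    and end_d: "path_end k s (g # gs) = d" and s: "zero_pos s" and d: "zero_pos d" and sd: "s \<noteq> d"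
    and b: "b \<in> TB eps ls" and no_ones: "\<forall>u<r. \<forall>c. one_pos c \<longrightarrow> (b ! u) c = 0"
    and S: "\<forall>h\<in>set (g # gs). \<forall>p. k_factors r h p = S p"
    and p: "p < r" and bps: "0 < (b ! p) s"
  defines "t \<equiv> gen_tgt k g"
  shows "ef_coeff eps xs ls g p b * act_word eps xs ls gs (basis_vec (b[p := move_token s t (b ! p)])) b'
    = (if b' = b[p := move_token s d (b ! p)]
       then (\<Prod>u\<in>S p. omega_eig eps (b ! u) s / omega_eig eps (b ! u) d)
         * (\<Prod>h\<leftarrow>g # gs. loop_factor h (xs ! p))
         * qq powi (int ((b ! p) s) - int ((b ! p) d) - 1) * qint (int ((b ! p) s))
       else 0)"
proof -
  have g: "is_ef k g" and src: "gen_src k g = s" using path by auto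
  have st: "s \<noteq> t" using gen_src_tgt_range[OF g two_le_length] src t_def by auto
  have t_one: "one_pos t" using ones ne by (cases gs) (auto simp: t_def)
  have td: "t \<noteq> d" using t_one d zero_pos_not_one_pos by blast
  have S_sub: "S p \<subseteq> {..<r} - {p}" using k_factors_subset[OF g p] S by auto
  let ?b1 = "b[p := move_token s t (b ! p)]"
  note b1 = single_token_after_move[OF b p bps s t_one no_ones]
  have "p < length b" using TB_length[OF b] p by simp
  note twice = move_token_twice[OF this st td sd bps]
  have tail: "act_word eps xs ls gs (basis_vec ?b1) = (\<lambda>b'. (\<Prod>h\<leftarrow>gs. loop_factor h (xs ! p))
      * (\<Prod>u\<in>S p. inverse (omega_eig eps (?b1 ! u) d)) * qq powi (- int ((?b1 ! p) d))
      * basis_vec (?b1[p := move_token t d (?b1 ! p)]) b')"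
  proof (rule act_word_token_through_ones)
    show "is_path k t gs" using path t_def by simp
    show "\<forall>c'\<in>set (butlast (path_visits k t gs)). one_pos c'"
      using ones ne by (cases gs) (auto simp: t_def)
  qed (use end_d d b1 p t_one S t_def in auto)
  have "(\<Prod>u\<in>S p. inverse (omega_eig eps (?b1 ! u) d)) = (\<Prod>u\<in>S p. inverse (omega_eig eps (b ! u) d))"
    using S_sub twice(1) by (intro prod.cong refl) (metis Diff_iff insertI1 subsetD)
  moreover have "ef_coeff eps xs ls g p b = (\<Prod>u\<in>S p. omega_eig eps (b ! u) s)
      * loop_factor g (xs ! p) * qq powi (int ((b ! p) s) - 1) * qint (int ((b ! p) s))"
  proof -
    have "omega_eig eps (b ! u) t = 1" if "u \<in> S p" for u
      using that S_sub no_ones t_one by auto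
    moreover have "(b ! p) t = 0" using no_ones p t_one by blast
    ultimately show ?thesis using S src t_def by (simp add: ef_coeff_def Let_def mult_ac)
  qed
  moreover have "qq powi (int ((b ! p) s) - int ((b ! p) d) - 1)
      = qq powi (int ((b ! p) s) - 1) * qq powi (- int ((b ! p) d))"
    by (simp add: power_int_add[symmetric] algebra_simps)
  ultimately show ?thesis unfolding tail twice(2,3)
    by (simp add: basis_vec_def divide_inverse prod.distrib mult_ac)
qed

lemma act_word_path:
  assumes path: "is_path k s gs" and ne: "gs \<noteq> []"
    and ones: "\<forall>c\<in>set (butlast (path_visits k s gs)). one_pos c"
    and end_d: "path_end k s gs = d" and s: "zero_pos s" and d: "zero_pos d" and sd: "s \<noteq> d"
    and b: "b \<in> TB eps ls" and no_ones: "\<forall>u<r. \<forall>c. one_pos c \<longrightarrow> (b ! u) c = 0"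
    and S: "\<forall>g\<in>set gs. \<forall>p. k_factors r g p = S p"
  shows "act_word eps xs ls gs (basis_vec b) = (\<lambda>b'. \<Sum>p<r.
     if 0 < (b ! p) s \<and> b' = b[p := move_token s d (b ! p)]
     then (\<Prod>u\<in>S p. omega_eig eps (b ! u) s / omega_eig eps (b ! u) d)
        * (\<Prod>g\<leftarrow>gs. loop_factor g (xs ! p))
        * qq powi (int ((b ! p) s) - int ((b ! p) d) - 1) * qint (int ((b ! p) s))
     else 0)"
proof -
  obtain g gs' where gs: "gs = g # gs'" using ne by (cases gs) auto
  define t where "t = gen_tgt k g"
  have g: "is_ef k g" and src: "gen_src k g = s" using path gs by auto
  have t: "t \<in> {1..k}" and st: "s \<noteq> t" using gen_src_tgt_range[OF g two_le_length] src t_def by auto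
  have mv: "move_token s t (b ! p) \<in> basisW eps (ls ! p)" if "p < r" "0 < (b ! p) s" for p
  proof (rule move_token_basisW)
    show "b ! p \<in> basisW eps (ls ! p)" using b that by (simp add: TB_def)
  qed (use that st t no_ones in \<open>auto simp: one_pos_def\<close>)
  let ?c = "\<lambda>p. if 0 < (b ! p) s then ef_coeff eps xs ls g p b else 0"
  have step: "act eps xs ls g (basis_vec b)
      = (\<lambda>b'. \<Sum>p<r. ?c p * basis_vec (b[p := move_token s t (b ! p)]) b')"
    using act_ef_basis_vec_expand[OF b g] mv src t_def by simp
  show ?thesis
  proof (cases "gs' = []")
    case True
    then have "t = d" using end_d gs t_def by simp
    then show ?thesis unfolding gs True act_word_Cons act_word_Nil step
      using S gs src by (auto simp: basis_vec_def ef_coeff_def Let_def t_def mult_ac intro!: sum.cong)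
  next
    case False
    note per_token = act_word_token_from_zero[OF path[unfolded gs] False ones[unfolded gs]
        end_d[unfolded gs] s d sd b no_ones S[unfolded gs]]
    have "?c p * act_word eps xs ls gs' (basis_vec (b[p := move_token s t (b ! p)])) b'
      = (if 0 < (b ! p) s \<and> b' = b[p := move_token s d (b ! p)]
         then (\<Prod>u\<in>S p. omega_eig eps (b ! u) s / omega_eig eps (b ! u) d)
           * (\<Prod>h\<leftarrow>g # gs'. loop_factor h (xs ! p))
           * qq powi (int ((b ! p) s) - int ((b ! p) d) - 1) * qint (int ((b ! p) s))
         else 0)" if "p < r" for p b'
      using per_token[OF that] t_def by (cases "0 < (b ! p) s") simp_all
    then show ?thesis
      unfolding gs act_word_Cons step act_word_lincomb[OF finite_lessThan]
      by (intro ext sum.cong refl) simp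
  qed
qed

end

section \<open>Moving a weight towards a target one token at a time\<close>

definition prefix_sum :: "(nat \<Rightarrow> nat) \<Rightarrow> nat \<Rightarrow> nat" where
  "prefix_sum n x = (\<Sum>c\<in>{1..x}. n c)"

definition prefix_gap :: "(nat \<Rightarrow> nat) \<Rightarrow> (nat \<Rightarrow> nat) \<Rightarrow> nat \<Rightarrow> int" where
  "prefix_gap n n0 x = int (prefix_sum n x) - int (prefix_sum n0 x)"

definition weight_distance :: "nat \<Rightarrow> (nat \<Rightarrow> nat) \<Rightarrow> (nat \<Rightarrow> nat) \<Rightarrow> nat" where
  "weight_distance k n n0 = (\<Sum>x\<in>{1..k}. nat \<bar>prefix_gap n n0 x\<bar>)"

lemma prefix_sum_Suc: "prefix_sum n (Suc x) = prefix_sum n x + n (Suc x)"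
  by (simp add: prefix_sum_def)

lemma prefix_gap_0 [simp]: "prefix_gap n n0 0 = 0"
  by (simp add: prefix_gap_def prefix_sum_def)

lemma prefix_gap_Suc: "prefix_gap n n0 (Suc x) = prefix_gap n n0 x + int (n (Suc x)) - int (n0 (Suc x))"
  by (simp add: prefix_gap_def prefix_sum_Suc)

lemma prefix_sum_move_left:
  assumes "1 \<le> n (Suc t)" "0 < t"
  shows "prefix_sum (move_token (Suc t) t n) x = prefix_sum n x + (if x = t then 1 else 0)"
  by (induction x) (use assms in \<open>auto simp: prefix_sum_Suc move_token_def prefix_sum_def\<close>)

lemma prefix_sum_move_right:
  assumes "1 \<le> n s" "1 \<le> s"
  shows "prefix_sum (move_token s (Suc s) n) x + (if x = s then 1 else 0) = prefix_sum n x"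
  by (induction x) (use assms in \<open>auto simp: prefix_sum_Suc move_token_def prefix_sum_def\<close>)

lemma weight_distance_move_left:
  assumes "1 \<le> t" "t \<le> k" "1 \<le> n (Suc t)" "prefix_gap n n0 t < 0"
  shows "weight_distance k (move_token (Suc t) t n) n0 < weight_distance k n n0"
  unfolding weight_distance_def
proof (rule sum_strict_mono_ex1)
  have gap: "prefix_gap (move_token (Suc t) t n) n0 x = prefix_gap n n0 x + (if x = t then 1 else 0)" for x
    using prefix_sum_move_left[where n = n and t = t, OF assms(3)] assms(1) by (simp add: prefix_gap_def)
  show "\<forall>x\<in>{1..k}. nat \<bar>prefix_gap (move_token (Suc t) t n) n0 x\<bar> \<le> nat \<bar>prefix_gap n n0 x\<bar>"
    using assms(4) by (auto simp: gap)
  show "\<exists>x\<in>{1..k}. nat \<bar>prefix_gap (move_token (Suc t) t n) n0 x\<bar> < nat \<bar>prefix_gap n n0 x\<bar>"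
    using assms by (intro bexI[of _ t]) (auto simp: gap)
qed simp

lemma weight_distance_move_right:
  assumes "1 \<le> s" "s \<le> k" "1 \<le> n s" "0 < prefix_gap n n0 s"
  shows "weight_distance k (move_token s (Suc s) n) n0 < weight_distance k n n0"
  unfolding weight_distance_def
proof (rule sum_strict_mono_ex1)
  have gap: "prefix_gap (move_token s (Suc s) n) n0 x + (if x = s then 1 else 0) = prefix_gap n n0 x" for x
    using prefix_sum_move_right[where n = n and s = s and x = x, OF assms(3,1)]
    unfolding prefix_gap_def by (cases "x = s") auto
  show "\<forall>x\<in>{1..k}. nat \<bar>prefix_gap (move_token s (Suc s) n) n0 x\<bar> \<le> nat \<bar>prefix_gap n n0 x\<bar>"
  proof
    fix x
    show "nat \<bar>prefix_gap (move_token s (Suc s) n) n0 x\<bar> \<le> nat \<bar>prefix_gap n n0 x\<bar>"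
      using assms(4) gap[of x] by (cases "x = s") auto
  qed
  show "\<exists>x\<in>{1..k}. nat \<bar>prefix_gap (move_token s (Suc s) n) n0 x\<bar> < nat \<bar>prefix_gap n n0 x\<bar>"
    using assms gap[of s] by (intro bexI[of _ s]) auto
qed simp

text \<open>With at most one token per position in the target, a negative gap can only
  deepen to the left of an occupied position, and a positive one only to the right.\<close>

lemma empty_left_neighbour:
  assumes "\<forall>c. n0 c \<le> 1"
  shows "1 \<le> y \<Longrightarrow> prefix_gap n n0 y < 0 \<Longrightarrow> 1 \<le> n (Suc y) \<Longrightarrow>
    \<exists>t. 1 \<le> t \<and> t \<le> y \<and> prefix_gap n n0 t < 0 \<and> n t = 0 \<and> 1 \<le> n (Suc t)"
proof (induction y)
  case (Suc y)
  show ?case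
  proof (cases "n (Suc y) = 0")
    case False
    moreover have "n0 (Suc y) \<le> 1" using assms by blast
    ultimately have "prefix_gap n n0 y < 0"
      using Suc.prems(2) prefix_gap_Suc[of n n0 y] by linarith
    moreover from this have "1 \<le> y" by (cases y) auto
    ultimately show ?thesis using Suc.IH False by force
  qed (use Suc.prems in auto)
qed simp

lemma empty_right_neighbour:
  assumes "\<forall>c. n0 c \<le> 1" and "prefix_gap n n0 k = 0"
  shows "y \<le> k \<Longrightarrow> 1 \<le> y \<Longrightarrow> 0 < prefix_gap n n0 y \<Longrightarrow> 1 \<le> n y \<Longrightarrow>
    \<exists>s. y \<le> s \<and> s < k \<and> 0 < prefix_gap n n0 s \<and> 1 \<le> n s \<and> n (Suc s) = 0"
proof (induction "k - y" arbitrary: y)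
  case (Suc j)
  have yk: "y < k" using Suc.prems assms(2) by (cases "y = k") auto
  show ?case
  proof (cases "n (Suc y) = 0")
    case False
    moreover have "n0 (Suc y) \<le> 1" using assms(1) by blast
    ultimately have "0 < prefix_gap n n0 (Suc y)"
      using Suc.prems(3) prefix_gap_Suc[of n n0 y] by linarith
    then obtain s where "Suc y \<le> s \<and> s < k \<and> 0 < prefix_gap n n0 s \<and> 1 \<le> n s \<and> n (Suc s) = 0"
      using Suc.hyps(1)[of "Suc y"] Suc.hyps(2) yk False by force
    then show ?thesis by (intro exI[of _ s]) auto
  qed (use Suc.prems yk in auto)
qed (use assms(2) in auto)

lemma exists_left_move:
  assumes n0: "\<forall>c. n0 c \<le> 1" and gap_k: "prefix_gap n n0 k = 0"
    and neg: "\<exists>x\<in>{1..k}. prefix_gap n n0 x < 0"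
  shows "\<exists>t. 1 \<le> t \<and> t < k \<and> 1 \<le> n (Suc t) \<and> n t = 0
    \<and> weight_distance k (move_token (Suc t) t n) n0 < weight_distance k n n0"
proof -
  let ?A = "{x\<in>{1..k}. prefix_gap n n0 x < 0}"
  define x0 where "x0 = Max ?A"
  have x0: "x0 \<in> ?A" unfolding x0_def using neg by (intro Max_in) auto
  have x0k: "x0 < k" using x0 gap_k by (cases "x0 = k") auto
  have "\<not> prefix_gap n n0 (Suc x0) < 0"
  proof
    assume "prefix_gap n n0 (Suc x0) < 0"
    then have "Suc x0 \<in> ?A" using x0k by auto
    then show False using Max_ge[of ?A "Suc x0"] unfolding x0_def[symmetric] by simp
  qed
  then have "1 \<le> n (Suc x0)" using x0 prefix_gap_Suc[of n n0 x0] by auto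
  then obtain t where "1 \<le> t" "t \<le> x0" "prefix_gap n n0 t < 0" "n t = 0" "1 \<le> n (Suc t)"
    using empty_left_neighbour[OF n0, of x0 n] x0 by auto
  then show ?thesis using weight_distance_move_left[of t k n n0] x0k by (intro exI[of _ t]) auto
qed

lemma exists_right_move:
  assumes n0: "\<forall>c. n0 c \<le> 1" and gap_k: "prefix_gap n n0 k = 0"
    and pos: "\<exists>x\<in>{1..k}. 0 < prefix_gap n n0 x" and nonneg: "\<forall>x\<in>{1..k}. 0 \<le> prefix_gap n n0 x"
  shows "\<exists>s. 1 \<le> s \<and> s < k \<and> 1 \<le> n s \<and> n (Suc s) = 0
    \<and> weight_distance k (move_token s (Suc s) n) n0 < weight_distance k n n0"
proof -
  let ?A = "{x\<in>{1..k}. 0 < prefix_gap n n0 x}"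
  define x0 where "x0 = Min ?A"
  have x0: "x0 \<in> ?A" unfolding x0_def using pos by (intro Min_in) auto
  then obtain x1 where x1: "x0 = Suc x1" by (cases x0) auto
  have "prefix_gap n n0 x1 = 0"
  proof (cases x1)
    case (Suc z)
    then have x1k: "x1 \<in> {1..k}" using x0 x1 by auto
    then have "x1 \<notin> ?A" using Min_le[of ?A x1] x1 unfolding x0_def[symmetric] by auto
    then show ?thesis using nonneg x1k by fastforce
  qed simp
  then have "1 \<le> n x0" using x0 prefix_gap_Suc[of n n0 x1] x1 by auto
  then obtain s where "x0 \<le> s" "s < k" "0 < prefix_gap n n0 s" "1 \<le> n s" "n (Suc s) = 0"
    using empty_right_neighbour[OF n0 gap_k, of x0] x0 by auto
  then show ?thesis using weight_distance_move_right[of s k n n0] x0 by (intro exI[of _ s]) auto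
qed

lemma exists_weight_distance_decreasing_move:
  assumes n0: "\<forall>c. n0 c \<le> 1" and sums: "prefix_sum n k = prefix_sum n0 k"
    and ne: "\<exists>c\<in>{1..k}. n c \<noteq> n0 c"
  shows "\<exists>s t. s \<in> {1..k} \<and> t \<in> {1..k} \<and> (t = Suc s \<or> s = Suc t) \<and> 1 \<le> n s \<and> n t = 0
    \<and> weight_distance k (move_token s t n) n0 < weight_distance k n n0"
proof -
  have gap_k: "prefix_gap n n0 k = 0" using sums by (simp add: prefix_gap_def)
  have "\<exists>x\<in>{1..k}. prefix_gap n n0 x \<noteq> 0"
  proof (rule ccontr)
    assume "\<not> ?thesis"
    then have zero: "prefix_gap n n0 x = 0" if "x \<le> k" for x
      using that by (cases x) auto
    obtain c where c: "c \<in> {1..k}" "n c \<noteq> n0 c" using ne by blast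
    then obtain c' where "c = Suc c'" by (cases c) auto
    then show False using prefix_gap_Suc[of n n0 c'] zero[of c] zero[of c'] c by auto
  qed
  then consider "\<exists>x\<in>{1..k}. prefix_gap n n0 x < 0"
    | "\<exists>x\<in>{1..k}. 0 < prefix_gap n n0 x" "\<forall>x\<in>{1..k}. 0 \<le> prefix_gap n n0 x"
    by force
  then show ?thesis
  proof cases
    case 1
    then obtain t where "1 \<le> t" "t < k" "1 \<le> n (Suc t)" "n t = 0"
        "weight_distance k (move_token (Suc t) t n) n0 < weight_distance k n n0"
      using exists_left_move[OF n0 gap_k] by blast
    then show ?thesis by (intro exI[of _ "Suc t"] exI[of _ t]) auto
  next
    case 2
    then obtain s where "1 \<le> s" "s < k" "1 \<le> n s" "n (Suc s) = 0"
        "weight_distance k (move_token s (Suc s) n) n0 < weight_distance k n n0"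
      using exists_right_move[OF n0 gap_k] by blast
    then show ?thesis by (intro exI[of _ s] exI[of _ "Suc s"]) auto
  qed
qed

definition weight :: "(nat \<Rightarrow> nat) list \<Rightarrow> nat \<Rightarrow> nat" where
  "weight b c = (\<Sum>q<length b. (b ! q) c)"

lemma weight_move_token:
  assumes p: "p < length b" and s: "0 < (b ! p) s" and st: "s \<noteq> t"
  shows "weight (b[p := move_token s t (b ! p)]) = move_token s t (weight b)"
proof
  fix c
  let ?R = "\<Sum>q\<in>{..<length b} - {p}. (b ! q) c"
  have "(\<Sum>q\<in>{..<length b} - {p}. (b[p := move_token s t (b ! p)] ! q) c) = ?R"
    by (intro sum.cong) auto
  then have "weight (b[p := move_token s t (b ! p)]) c = move_token s t (b ! p) c + ?R"
    unfolding weight_def using p by (simp add: sum.remove)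
  moreover have "weight b c = (b ! p) c + ?R" unfolding weight_def using p by (simp add: sum.remove)
  ultimately show "weight (b[p := move_token s t (b ! p)]) c = move_token s t (weight b) c"
    using s st by (auto simp: move_token_apply)
qed

lemma weight_outside: "b \<in> TB eps ls \<Longrightarrow> c \<notin> {1..length eps} \<Longrightarrow> weight b c = 0"
  unfolding weight_def by (intro sum.neutral) (auto simp: TB_def basisW_def)

lemma weight_pos_obtain: "0 < weight b s \<Longrightarrow> \<exists>p<length b. 0 < (b ! p) s"
  unfolding weight_def by (metis lessThan_iff not_gr_zero sum.neutral)

lemma weight_zero_nth: "weight b t = 0 \<Longrightarrow> p < length b \<Longrightarrow> (b ! p) t = 0"
  unfolding weight_def by simp

lemma prefix_sum_weight:
  assumes b: "b \<in> TB eps ls"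
  shows "prefix_sum (weight b) (length eps) = sum_list ls"
proof -
  have "prefix_sum (weight b) (length eps) = (\<Sum>q<length ls. \<Sum>c\<in>{1..length eps}. (b ! q) c)"
    unfolding prefix_sum_def weight_def TB_length[OF b] by (rule sum.swap)
  also have "\<dots> = (\<Sum>q<length ls. ls ! q)"
    by (intro sum.cong refl) (use b in \<open>auto simp: TB_def basisW_def\<close>)
  finally show ?thesis by (simp add: sum_list_sum_nth atLeast0LessThan)
qed

lemma act_diagonal:
  assumes v: "v \<in> vecs eps ls"
  shows act_W: "act eps xs ls (W c) v = (\<lambda>b. qpar eps c ^ weight b c * v b)"
    and act_Winv: "act eps xs ls (Winv c) v = (\<lambda>b. inverse (qpar eps c ^ weight b c) * v b)"
proof -
  have "(\<Prod>t<length ls. qpar eps c ^ (b ! t) c) = qpar eps c ^ weight b c" if "b \<in> TB eps ls" for b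
    using TB_length[OF that] by (simp add: weight_def power_sum)
  then have "entT eps xs ls (W c) b b' * v b' = (if b' = b then qpar eps c ^ weight b c * v b else 0)"
    and "entT eps xs ls (Winv c) b b' * v b'
      = (if b' = b then inverse (qpar eps c ^ weight b c) * v b else 0)"
    if "b \<in> TB eps ls" for b b'
    using that by (auto simp: entT_def)
  then show "act eps xs ls (W c) v = (\<lambda>b. qpar eps c ^ weight b c * v b)"
    and "act eps xs ls (Winv c) v = (\<lambda>b. inverse (qpar eps c ^ weight b c) * v b)"
    using v finite_TB by (auto simp: act_def vecs_def fun_eq_iff)
qed

text \<open>Induction on the number of eigenvalues other than mu in the support of u: multiplying by
  (d - nu) / (mu - nu) removes the eigenvalue nu and keeps the mu-component.\<close>

lemma submoduleT_eigen_component: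
  assumes U: "submoduleT eps xs ls U" and D: "\<And>v. v \<in> U \<Longrightarrow> (\<lambda>b. d b * v b) \<in> U"
  shows "u \<in> U \<Longrightarrow> (\<lambda>b. if d b = \<mu> then u b else 0) \<in> U"
proof (induction "card (d ` {b. u b \<noteq> 0} - {\<mu>})" arbitrary: u rule: less_induct)
  case (less u)
  have fin: "finite {b. u b \<noteq> 0}"
    using submoduleT_vecs[OF U less.prems] finite_TB
    by (rule_tac finite_subset[of _ "TB eps ls"]) (auto simp: vecs_def)
  show ?case
  proof (cases "d ` {b. u b \<noteq> 0} - {\<mu>} = {}")
    case True
    then have "(\<lambda>b. if d b = \<mu> then u b else 0) = u" by (auto simp: fun_eq_iff)
    then show ?thesis using less.prems by simp
  next
    case False
    then obtain \<nu> where l: "\<nu> \<in> d ` {b. u b \<noteq> 0}" "\<nu> \<noteq> \<mu>" by blast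
    define u' where "u' = (\<lambda>b. inverse (\<mu> - \<nu>) * (d b * u b) + (inverse (\<mu> - \<nu>) * - \<nu>) * u b)"
    have u'U: "u' \<in> U"
      unfolding u'_def using submoduleT_add[OF U] submoduleT_scale[OF U] D[OF less.prems] less.prems
      by blast
    have u'_eq: "u' b = (d b - \<nu>) / (\<mu> - \<nu>) * u b" for b
      unfolding u'_def by (simp add: divide_inverse algebra_simps)
    have "d ` {b. u' b \<noteq> 0} - {\<mu>} \<subseteq> (d ` {b. u b \<noteq> 0} - {\<mu>}) - {\<nu>}"
      by (auto simp: u'_eq)
    then have "card (d ` {b. u' b \<noteq> 0} - {\<mu>}) \<le> card (d ` {b. u b \<noteq> 0} - {\<mu>} - {\<nu>})"
      using fin by (intro card_mono) auto
    also have "\<dots> < card (d ` {b. u b \<noteq> 0} - {\<mu>})"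
      using l fin by (intro card_Diff1_less) auto
    finally have "card (d ` {b. u' b \<noteq> 0} - {\<mu>}) < card (d ` {b. u b \<noteq> 0} - {\<mu>})" .
    then have "(\<lambda>b. if d b = \<mu> then u' b else 0) \<in> U" using less.hyps u'U by blast
    moreover have "(\<lambda>b. if d b = \<mu> then u' b else 0) = (\<lambda>b. if d b = \<mu> then u b else 0)"
      using l by (auto simp: fun_eq_iff u'_eq)
    ultimately show ?thesis by simp
  qed
qed

lemma submoduleT_weight_component:
  assumes U: "submoduleT eps xs ls U" and u: "u \<in> U" and b0: "u b0 \<noteq> 0"
  shows "\<exists>u'\<in>U. u' b0 \<noteq> 0 \<and> (\<forall>b. u' b \<noteq> 0 \<longrightarrow> weight b = weight b0)"
proof -
  have b0T: "b0 \<in> TB eps ls" using submoduleT_vecs[OF U u] b0 by (auto simp: vecs_def)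
  have "finite C \<Longrightarrow> C \<subseteq> {1..length eps}
    \<Longrightarrow> (\<lambda>b. if \<forall>c\<in>C. weight b c = weight b0 c then u b else 0) \<in> U" for C
  proof (induction C rule: finite_induct)
    case (insert c C)
    let ?v = "\<lambda>b. if \<forall>c\<in>C. weight b c = weight b0 c then u b else 0"
    have Wc: "valid_gen (length eps) (W c)" using insert.prems by (simp add: valid_gen_def)
    have "(\<lambda>b. qpar eps c ^ weight b c * v b) \<in> U" if "v \<in> U" for v
      using submoduleT_act[OF U that Wc] unfolding act_W[OF submoduleT_vecs[OF U that]] .
    then have "(\<lambda>b. if qpar eps c ^ weight b c = qpar eps c ^ weight b0 c then ?v b else 0) \<in> U"
      using insert by (intro submoduleT_eigen_component[OF U]) auto
    moreover have "(\<lambda>b. if qpar eps c ^ weight b c = qpar eps c ^ weight b0 c then ?v b else 0)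
        = (\<lambda>b. if \<forall>c\<in>insert c C. weight b c = weight b0 c then u b else 0)"
      by (auto simp: fun_eq_iff qpar_power_eq_iff)
    ultimately show ?case by simp
  qed (use u in simp)
  then have uU: "(\<lambda>b. if \<forall>c\<in>{1..length eps}. weight b c = weight b0 c then u b else 0) \<in> U"
    by simp
  show ?thesis
  proof (rule bexI[OF _ uU], intro conjI allI impI)
    fix b assume h: "(if \<forall>c\<in>{1..length eps}. weight b c = weight b0 c then u b else 0) \<noteq> 0"
    then have bT: "b \<in> TB eps ls" using submoduleT_vecs[OF U u] by (auto simp: vecs_def split: if_splits)
    show "weight b = weight b0"
    proof
      fix c
      show "weight b c = weight b0 c"
        using h weight_outside[OF bT] weight_outside[OF b0T] by (cases "c \<in> {1..length eps}") (auto split: if_splits)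
    qed
  qed (use b0 in simp)
qed

definition move_gen :: "nat \<Rightarrow> nat \<Rightarrow> gen" where
  "move_gen s t = (if t = Suc s then F s else E t)"

lemma move_gen:
  assumes "s \<in> {1..k}" "t \<in> {1..k}" "t = Suc s \<or> s = Suc t"
  shows "is_ef k (move_gen s t)" "gen_src k (move_gen s t) = s" "gen_tgt k (move_gen s t) = t"
    "valid_gen k (move_gen s t)"
  using assms by (auto simp: move_gen_def ia_def valid_gen_def)

context parity_tensor
begin

lemma act_ef_weight:
  assumes g: "is_ef k g" and u: "\<forall>b. u b \<noteq> 0 \<longrightarrow> weight b = n"
    and nz: "act eps xs ls g u b \<noteq> 0"
  shows "weight b = move_token (gen_src k g) (gen_tgt k g) n"
proof -
  let ?s = "gen_src k g" and ?t = "gen_tgt k g"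
  have "(\<Sum>b0\<in>TB eps ls. u b0 * act eps xs ls g (basis_vec b0) b) \<noteq> 0"
    using nz by (subst (asm) act_expand) simp
  then obtain b0 where b0: "b0 \<in> TB eps ls" "u b0 * act eps xs ls g (basis_vec b0) b \<noteq> 0"
    by (rule sum.not_neutral_contains_not_neutral)
  then have "(\<Sum>p<r. if 0 < (b0 ! p) ?s \<and> move_token ?s ?t (b0 ! p) \<in> basisW eps (ls ! p)
      \<and> b = b0[p := move_token ?s ?t (b0 ! p)] then ef_coeff eps xs ls g p b0 else 0) \<noteq> 0"
    using act_ef_basis_vec[OF b0(1) two_le_length g] by simp
  then obtain p where "p < r" "0 < (b0 ! p) ?s" "b = b0[p := move_token ?s ?t (b0 ! p)]"
    by (rule sum.not_neutral_contains_not_neutral) (simp split: if_splits)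
  then have "weight b = move_token ?s ?t (weight b0)"
    using weight_move_token gen_src_tgt_range[OF g two_le_length] TB_length[OF b0(1)] by simp
  then show ?thesis using u b0(2) by auto
qed

text \<open>If the target position is empty in b0, the result b1 of moving one token of factor p
  determines both p and b0.\<close>

lemma act_ef_into_empty_position:
  assumes g: "is_ef k g" and b: "b \<in> TB eps ls" and b0: "b0 \<in> TB eps ls"
    and empty: "weight b0 (gen_tgt k g) = 0" and p: "p < r" and src: "0 < (b0 ! p) (gen_src k g)"
    and mv: "move_token (gen_src k g) (gen_tgt k g) (b0 ! p) \<in> basisW eps (ls ! p)"
  shows "act eps xs ls g (basis_vec b) (b0[p := move_token (gen_src k g) (gen_tgt k g) (b0 ! p)])
    = (if b = b0 then ef_coeff eps xs ls g p b0 else 0)"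
proof -
  let ?s = "gen_src k g" and ?t = "gen_tgt k g"
  let ?b1 = "b0[p := move_token ?s ?t (b0 ! p)]"
  have st: "?s \<noteq> ?t" using gen_src_tgt_range[OF g two_le_length] by simp
  have unique: "p' = p \<and> b = b0"
    if p': "p' < r" "0 < (b ! p') ?s" and eq: "?b1 = b[p' := move_token ?s ?t (b ! p')]" for p'
  proof -
    have "(?b1 ! p') ?t \<noteq> 0" using eq p' st TB_length[OF b] by (simp add: move_token_apply)
    then have pp: "p' = p"
      using weight_zero_nth[OF empty] TB_length[OF b0] p' by (cases "p' = p") auto
    then have "move_token ?s ?t (b ! p) = move_token ?s ?t (b0 ! p)"
      using arg_cong[OF eq, of "\<lambda>l. l ! p"] p TB_length[OF b] TB_length[OF b0] by simp
    then have "b ! p = b0 ! p" using move_token_inj[OF st] p' pp src by blast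
    moreover have "b ! q = b0 ! q" if "q \<noteq> p" for q
      using arg_cong[OF eq, of "\<lambda>l. l ! q"] that pp by simp
    ultimately have "b = b0"
      using TB_length[OF b] TB_length[OF b0] by (metis nth_equalityI)
    then show ?thesis using pp by simp
  qed
  have "act eps xs ls g (basis_vec b) ?b1 = (\<Sum>p'<r. if p' = p \<and> b = b0 then ef_coeff eps xs ls g p b0 else 0)"
    unfolding act_ef_basis_vec[OF b two_le_length g]
    by (intro sum.cong refl) (use unique mv src in auto)
  then show ?thesis using p by simp
qed

lemma submoduleT_move_weight:
  assumes U: "submoduleT eps xs ls U" and u: "u \<in> U" and b0: "u b0 \<noteq> 0"
    and wt: "\<forall>b. u b \<noteq> 0 \<longrightarrow> weight b = n"
    and s: "s \<in> {1..k}" and t: "t \<in> {1..k}" and adj: "t = Suc s \<or> s = Suc t"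
    and ns: "1 \<le> n s" and nt: "n t = 0"
  shows "\<exists>u'\<in>U. \<exists>b1. u' b1 \<noteq> 0 \<and> (\<forall>b. u' b \<noteq> 0 \<longrightarrow> weight b = move_token s t n)"
proof -
  let ?g = "move_gen s t"
  note g = move_gen[OF s t adj]
  have b0T: "b0 \<in> TB eps ls" using submoduleT_vecs[OF U u] b0 by (auto simp: vecs_def)
  have wb0: "weight b0 = n" using wt b0 by blast
  obtain p where p: "p < r" "0 < (b0 ! p) s"
    using weight_pos_obtain[of b0 s] wb0 ns TB_length[OF b0T] by auto
  have mv: "move_token s t (b0 ! p) \<in> basisW eps (ls ! p)"
  proof (rule move_token_basisW[where s = s and t = t])
    show "b0 ! p \<in> basisW eps (ls ! p)" using b0T p by (simp add: TB_def)
    show "(b0 ! p) t = 0" using weight_zero_nth[of b0 t p] wb0 nt TB_length[OF b0T] p by simp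
  qed (use adj p t in auto)
  define b1 where "b1 = b0[p := move_token s t (b0 ! p)]"
  have "act eps xs ls ?g u b1 = (\<Sum>b\<in>TB eps ls. u b * (if b = b0 then ef_coeff eps xs ls ?g p b0 else 0))"
    unfolding act_expand[of eps xs ls ?g u] b1_def
    by (intro sum.cong refl) (use act_ef_into_empty_position[OF g(1) _ b0T] wb0 nt p mv g in simp)
  also have "\<dots> = u b0 * ef_coeff eps xs ls ?g p b0"
    using b0T finite_TB by (simp add: if_distrib[of "\<lambda>x. u _ * x"] sum.delta' cong: if_cong)
  finally have "act eps xs ls ?g u b1 \<noteq> 0" using b0 ef_coeff_nonzero[OF p(1)] p(2) g by simp
  moreover have "weight b = move_token s t n" if "act eps xs ls ?g u b \<noteq> 0" for b
    using act_ef_weight[OF g(1) wt that] g by simp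
  ultimately show ?thesis using submoduleT_act[OF U u g(4)] by blast
qed

lemma basis_vec_from_moved:
  assumes U: "submoduleT eps xs ls U" and c: "c \<in> TB eps ls" and wc: "weight c = n"
    and s: "s \<in> {1..k}" and t: "t \<in> {1..k}" and adj: "t = Suc s \<or> s = Suc t"
    and ns: "1 \<le> n s" and nt: "n t = 0"
    and moved: "\<forall>c'\<in>TB eps ls. weight c' = move_token s t n \<longrightarrow> basis_vec c' \<in> U"
  shows "basis_vec c \<in> U"
proof -
  let ?g = "move_gen t s"
  have adj': "s = Suc t \<or> t = Suc s" using adj by blast
  note g = move_gen[OF t s adj']
  have st: "s \<noteq> t" using adj by auto
  obtain p where p: "p < r" "0 < (c ! p) s"
    using weight_pos_obtain[of c s] wc ns TB_length[OF c] by auto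
  have t_empty: "(c ! p') t = 0" if "p' < r" for p'
    using weight_zero_nth[of c t p'] wc nt TB_length[OF c] that by simp
  have cp: "c ! p \<in> basisW eps (ls ! p)" using c p by (simp add: TB_def)
  have mv: "move_token s t (c ! p) \<in> basisW eps (ls ! p)"
    using move_token_basisW[OF cp p(2) st t] t_empty[OF p(1)] by simp
  define c1 where "c1 = c[p := move_token s t (c ! p)]"
  have c1: "c1 \<in> TB eps ls" unfolding c1_def using TB_list_update[OF c p(1) mv] .
  have c1p: "c1 ! p = move_token s t (c ! p)" unfolding c1_def using TB_length[OF c] p by simp
  have "weight c1 = move_token s t n" unfolding c1_def using weight_move_token p st TB_length[OF c] wc by simp
  then have c1U: "basis_vec c1 \<in> U" using moved c1 by blast
  have restored: "c1[p := move_token t s (c1 ! p)] = c"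
    unfolding c1p c1_def using move_token_back[where m = "c ! p", OF st p(2)] TB_length[OF c] p by simp
  have only_p: "0 < (c1 ! p') t \<longleftrightarrow> p' = p" if "p' < r" for p'
    using t_empty[OF that] c1p st by (cases "p' = p") (auto simp: c1_def move_token_apply)
  have "act eps xs ls ?g (basis_vec c1) = (\<lambda>b'. ef_coeff eps xs ls ?g p c1 * basis_vec c b')"
    using act_ef_single_token[OF c1 _ p(1)] g only_p restored cp c1p move_token_back[where m = "c ! p", OF st p(2)] by auto
  moreover have "ef_coeff eps xs ls ?g p c1 \<noteq> 0"
    using ef_coeff_nonzero[OF p(1)] only_p[OF p(1)] g by auto
  moreover have "(\<lambda>b. inverse (ef_coeff eps xs ls ?g p c1) * act eps xs ls ?g (basis_vec c1) b) \<in> U"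
    using submoduleT_scale[OF U submoduleT_act[OF U c1U]] g by auto
  ultimately show ?thesis by (simp add: mult.assoc[symmetric])
qed

lemma submoduleT_reach_weight:
  assumes U: "submoduleT eps xs ls U" and n0: "\<forall>c. n0 c \<le> 1"
    and sum_n0: "prefix_sum n0 k = sum_list ls"
  shows "u \<in> U \<Longrightarrow> u b0 \<noteq> 0 \<Longrightarrow> \<forall>b. u b \<noteq> 0 \<longrightarrow> weight b = n
    \<Longrightarrow> \<exists>u'\<in>U. \<exists>b1. u' b1 \<noteq> 0 \<and> (\<forall>b. u' b \<noteq> 0 \<longrightarrow> (\<forall>c\<in>{1..k}. weight b c = n0 c))"
proof (induction "weight_distance k n n0" arbitrary: u b0 n rule: less_induct)
  case less
  show ?case
  proof (cases "\<forall>c\<in>{1..k}. n c = n0 c")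
    case False
    have b0: "b0 \<in> TB eps ls" using submoduleT_vecs[OF U less.prems(1)] less.prems(2) by (auto simp: vecs_def)
    have "prefix_sum n k = prefix_sum n0 k"
      using prefix_sum_weight[OF b0] less.prems(2,3) sum_n0 by metis
    then obtain s t where st: "s \<in> {1..k}" "t \<in> {1..k}" "t = Suc s \<or> s = Suc t" "1 \<le> n s" "n t = 0"
        "weight_distance k (move_token s t n) n0 < weight_distance k n n0"
      using exists_weight_distance_decreasing_move[OF n0] False by blast
    then show ?thesis
      using submoduleT_move_weight[OF U less.prems st(1-5)] less.hyps[OF st(6)] by blast
  qed (use less.prems in blast)
qed

lemma basis_vecs_from_weight:
  assumes U: "submoduleT eps xs ls U" and n0: "\<forall>c. n0 c \<le> 1"
    and sum_n0: "prefix_sum n0 k = sum_list ls"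
    and base: "\<forall>c\<in>TB eps ls. (\<forall>x\<in>{1..k}. weight c x = n0 x) \<longrightarrow> basis_vec c \<in> U"
  shows "c \<in> TB eps ls \<Longrightarrow> basis_vec c \<in> U"
proof (induction "weight_distance k (weight c) n0" arbitrary: c rule: less_induct)
  case less
  show ?case
  proof (cases "\<forall>x\<in>{1..k}. weight c x = n0 x")
    case False
    have "prefix_sum (weight c) k = prefix_sum n0 k" using prefix_sum_weight[OF less.prems] sum_n0 by simp
    then obtain s t where st: "s \<in> {1..k}" "t \<in> {1..k}" "t = Suc s \<or> s = Suc t"
        "1 \<le> weight c s" "weight c t = 0"
        "weight_distance k (move_token s t (weight c)) n0 < weight_distance k (weight c) n0"
      using exists_weight_distance_decreasing_move[OF n0] False by blast
    then show ?thesis using basis_vec_from_moved[OF U less.prems refl st(1-5)] less.hyps by auto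
  qed (use less.prems base in blast)
qed

end

section \<open>The even positions carry a copy of the purely even module\<close>

definition zero_positions :: "nat list \<Rightarrow> nat list" where
  "zero_positions eps = filter (\<lambda>c. eps ! (c - 1) = 0) [1..<Suc (length eps)]"

lemma nzeros_eq_length_zero_positions: "nzeros eps = length (zero_positions eps)"
proof -
  have "map (\<lambda>c. eps ! (c - 1)) [1..<Suc (length eps)] = eps"
    by (rule nth_equalityI) (simp_all del: upt_Suc)
  then have "nzeros eps = length (filter (\<lambda>a. a = 0) (map (\<lambda>c. eps ! (c - 1)) [1..<Suc (length eps)]))"
    by (simp add: nzeros_def)
  then show ?thesis by (simp add: zero_positions_def filter_map comp_def)
qed

lemma sorted_zero_positions: "sorted_wrt (<) (zero_positions eps)"
  unfolding zero_positions_def by (rule sorted_wrt_filter, rule sorted_wrt_upt)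

text \<open>Two zeros are needed so that the wrap-around path of e_0 joins distinct positions;
  hence the bound N = l_1 + ... + l_r + 2 in the theorem.\<close>

locale zero_embedding = parity_tensor +
  assumes two_le_zeros: "2 \<le> length (zero_positions eps)"
begin

abbreviation "M \<equiv> length (zero_positions eps)"
abbreviation "epsZ \<equiv> replicate M (0 :: nat)"

text \<open>zpos j is the position of the j-th zero of eps (1-based, like positions).\<close>

definition zpos :: "nat \<Rightarrow> nat" where "zpos j = zero_positions eps ! (j - 1)"

lemma zpos_strict_mono: "strict_mono_on {1..M} zpos"
  by (rule strict_mono_onI)
    (use sorted_wrt_nth_less[OF sorted_zero_positions] in \<open>auto simp: zpos_def\<close>)

lemma zpos_less_iff: "i \<in> {1..M} \<Longrightarrow> j \<in> {1..M} \<Longrightarrow> zpos i < zpos j \<longleftrightarrow> i < j"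
  using strict_mono_on_less[OF zpos_strict_mono] by blast

lemma zpos_eq_iff: "i \<in> {1..M} \<Longrightarrow> j \<in> {1..M} \<Longrightarrow> zpos i = zpos j \<longleftrightarrow> i = j"
  using strict_mono_on_eq[OF zpos_strict_mono] by blast

lemma set_zero_positions: "set (zero_positions eps) = {c. zero_pos c}"
  by (auto simp: zero_positions_def zero_pos_def)

lemma zero_pos_zpos: "j \<in> {1..M} \<Longrightarrow> zero_pos (zpos j)"
  using set_zero_positions nth_mem[of "j - 1" "zero_positions eps"] by (auto simp: zpos_def)

lemma zpos_range: "j \<in> {1..M} \<Longrightarrow> zpos j \<in> {1..k}"
  using zero_pos_zpos by (simp add: zero_pos_def)

lemma zero_pos_obtain_zpos:
  assumes "zero_pos c"
  obtains j where "j \<in> {1..M}" "zpos j = c"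
proof -
  obtain i where "i < M" "zero_positions eps ! i = c"
    using assms set_zero_positions by (metis in_set_conv_nth mem_Collect_eq)
  then show thesis using that[of "Suc i"] by (auto simp: zpos_def)
qed

lemma one_pos_if_no_zpos:
  assumes "c \<in> {1..k}" "\<And>j. j \<in> {1..M} \<Longrightarrow> zpos j \<noteq> c"
  shows "one_pos c"
  using assms one_pos_or_zero_pos zero_pos_obtain_zpos by metis

lemma one_pos_between:
  assumes j: "j \<in> {1..<M}" and c: "zpos j < c" "c < zpos (Suc j)"
  shows "one_pos c"
proof (rule one_pos_if_no_zpos)
  have j1: "j \<in> {1..M}" and j2: "Suc j \<in> {1..M}" using j by auto
  then show "c \<in> {1..k}" using zpos_range[OF j2] c by auto
  fix i assume i: "i \<in> {1..M}"
  show "zpos i \<noteq> c"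
  proof
    assume "zpos i = c"
    then have "j < i" "i < Suc j" using zpos_less_iff[OF j1 i] zpos_less_iff[OF i j2] c by auto
    then show False by simp
  qed
qed

lemma one_pos_below:
  assumes c: "1 \<le> c" "c < zpos 1"
  shows "one_pos c"
proof (rule one_pos_if_no_zpos)
  have one: "1 \<in> {1..M}" using two_le_zeros by auto
  then show "c \<in> {1..k}" using zpos_range[OF one] c by auto
  fix i assume i: "i \<in> {1..M}"
  show "zpos i \<noteq> c" using zpos_less_iff[OF i one] i c by auto
qed

lemma one_pos_above:
  assumes c: "zpos M < c" "c \<le> k"
  shows "one_pos c"
proof (rule one_pos_if_no_zpos)
  have last: "M \<in> {1..M}" using two_le_zeros by auto
  show "c \<in> {1..k}" using c by auto
  fix i assume i: "i \<in> {1..M}"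
  show "zpos i \<noteq> c" using zpos_less_iff[OF last i] i c by auto
qed

end

context zero_embedding
begin

definition embed_zero :: "(nat \<Rightarrow> nat) \<Rightarrow> (nat \<Rightarrow> nat)" where
  "embed_zero m' c = (\<Sum>j\<in>{1..M}. if zpos j = c then m' j else 0)"

definition restrict_zero :: "(nat \<Rightarrow> nat) \<Rightarrow> (nat \<Rightarrow> nat)" where
  "restrict_zero m j = (if j \<in> {1..M} then m (zpos j) else 0)"

lemma embed_zero_zpos: "j \<in> {1..M} \<Longrightarrow> embed_zero m' (zpos j) = m' j"
proof -
  assume j: "j \<in> {1..M}"
  have "embed_zero m' (zpos j) = (\<Sum>i\<in>{1..M}. if i = j then m' i else 0)"
    unfolding embed_zero_def by (intro sum.cong refl) (use j zpos_eq_iff in auto)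
  then show ?thesis using j by simp
qed

lemma embed_zero_not_zero_pos: "\<not> zero_pos c \<Longrightarrow> embed_zero m' c = 0"
  unfolding embed_zero_def using zero_pos_zpos by (intro sum.neutral) auto

lemma sum_embed_zero: "(\<Sum>c\<in>{1..k}. embed_zero m' c) = (\<Sum>j\<in>{1..M}. m' j)"
proof -
  have "(\<Sum>c\<in>{1..k}. embed_zero m' c) = (\<Sum>j\<in>{1..M}. \<Sum>c\<in>{1..k}. if zpos j = c then m' j else 0)"
    unfolding embed_zero_def by (rule sum.swap)
  also have "\<dots> = (\<Sum>j\<in>{1..M}. m' j)"
    by (intro sum.cong refl) (use zpos_range in \<open>auto simp: sum.delta\<close>)
  finally show ?thesis .
qed

lemma restrict_embed_zero: "\<forall>j. m' j \<noteq> 0 \<longrightarrow> j \<in> {1..M} \<Longrightarrow> restrict_zero (embed_zero m') = m'"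
  by (auto simp: fun_eq_iff restrict_zero_def embed_zero_zpos)

lemma embed_restrict_zero: "\<forall>c. m c \<noteq> 0 \<longrightarrow> zero_pos c \<Longrightarrow> embed_zero (restrict_zero m) = m"
proof
  fix c assume supp: "\<forall>c. m c \<noteq> 0 \<longrightarrow> zero_pos c"
  show "embed_zero (restrict_zero m) c = m c"
  proof (cases "zero_pos c")
    case True
    then obtain j where "j \<in> {1..M}" "zpos j = c" by (rule zero_pos_obtain_zpos)
    then show ?thesis by (auto simp: embed_zero_zpos restrict_zero_def)
  qed (use supp embed_zero_not_zero_pos in metis)
qed

lemma basisW_epsZ: "basisW epsZ s = {m'. (\<forall>j. m' j \<noteq> 0 \<longrightarrow> j \<in> {1..M}) \<and> (\<Sum>j=1..M. m' j) = s}"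
  by (auto simp: basisW_def)

lemma embed_zero_basisW: "m' \<in> basisW epsZ s \<Longrightarrow> embed_zero m' \<in> basisW eps s"
  using embed_zero_not_zero_pos sum_embed_zero
  by (fastforce simp: basisW_epsZ basisW_def zero_pos_def)

lemma restrict_zero_basisW:
  assumes "m \<in> basisW eps s" "\<forall>c. m c \<noteq> 0 \<longrightarrow> zero_pos c"
  shows "restrict_zero m \<in> basisW epsZ s"
proof -
  have "(\<Sum>j=1..M. restrict_zero m j) = (\<Sum>c=1..k. embed_zero (restrict_zero m) c)"
    using sum_embed_zero by simp
  also have "\<dots> = s" using embed_restrict_zero[OF assms(2)] assms(1) by (simp add: basisW_def)
  finally show ?thesis by (auto simp: basisW_epsZ restrict_zero_def)
qed

lemma embed_zero_move_token:
  assumes a: "a \<in> {1..M}" and t: "t \<in> {1..M}" and at: "a \<noteq> t"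
  shows "embed_zero (move_token a t m') = move_token (zpos a) (zpos t) (embed_zero m')"
proof
  fix c
  have zat: "zpos a \<noteq> zpos t" using zpos_eq_iff a t at by blast
  show "embed_zero (move_token a t m') c = move_token (zpos a) (zpos t) (embed_zero m') c"
  proof (cases "zero_pos c")
    case True
    then obtain j where j: "j \<in> {1..M}" "zpos j = c" by (rule zero_pos_obtain_zpos)
    then show ?thesis
      using embed_zero_zpos[OF j(1)] embed_zero_zpos[OF a] embed_zero_zpos[OF t]
        zpos_eq_iff[OF j(1) a] zpos_eq_iff[OF j(1) t] at zat
      by (auto simp: move_token_apply)
  next
    case False
    then have "c \<noteq> zpos a" "c \<noteq> zpos t" using zero_pos_zpos a t by auto
    then show ?thesis using False embed_zero_not_zero_pos by (simp add: move_token_apply[OF at] move_token_apply[OF zat])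
  qed
qed

lemma qpar_zpos: "j \<in> {1..M} \<Longrightarrow> qpar eps (zpos j) = qpar epsZ j"
  using zero_pos_zpos by (auto simp: qpar_def zero_pos_def)

lemma omega_eig_embed_zero: "j \<in> {1..M} \<Longrightarrow> omega_eig eps (embed_zero m') (zpos j) = omega_eig epsZ m' j"
  by (simp add: omega_eig_def qpar_zpos embed_zero_zpos)

definition embedded_basis :: "(nat \<Rightarrow> nat) list set" where
  "embedded_basis = map embed_zero ` TB epsZ ls"

definition lift :: "((nat \<Rightarrow> nat) list \<Rightarrow> K) \<Rightarrow> ((nat \<Rightarrow> nat) list \<Rightarrow> K)" where
  "lift v' = (\<lambda>b. if b \<in> embedded_basis then v' (map restrict_zero b) else 0)"

lemma map_restrict_embed_zero: "c' \<in> TB epsZ ls \<Longrightarrow> map restrict_zero (map embed_zero c') = c'"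
  by (rule nth_equalityI) (auto simp: TB_def basisW_epsZ restrict_embed_zero)

lemma map_embed_zero_eq_iff:
  "c' \<in> TB epsZ ls \<Longrightarrow> c'' \<in> TB epsZ ls \<Longrightarrow> map embed_zero c' = map embed_zero c'' \<longleftrightarrow> c' = c''"
  using map_restrict_embed_zero by metis

lemma map_embed_zero_TB: "c' \<in> TB epsZ ls \<Longrightarrow> map embed_zero c' \<in> TB eps ls"
  by (auto simp: TB_def embed_zero_basisW)

lemma embedded_basis_subset_TB: "embedded_basis \<subseteq> TB eps ls"
  using map_embed_zero_TB by (auto simp: embedded_basis_def)

lemma embedded_basis_no_ones:
  assumes "b \<in> embedded_basis" "u < r" "one_pos c"
  shows "(b ! u) c = 0"
proof -
  obtain c' where "c' \<in> TB epsZ ls" "b = map embed_zero c'" using assms(1) by (auto simp: embedded_basis_def)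
  moreover have "\<not> zero_pos c" using assms(3) zero_pos_not_one_pos by blast
  ultimately show ?thesis using assms(2) TB_length by (simp add: embed_zero_not_zero_pos)
qed

lemma embedded_basisI:
  assumes b: "b \<in> TB eps ls" and zero: "\<forall>u<r. \<forall>c. (b ! u) c \<noteq> 0 \<longrightarrow> zero_pos c"
  shows "b \<in> embedded_basis"
proof -
  have "map restrict_zero b \<in> TB epsZ ls"
    using b zero restrict_zero_basisW by (auto simp: TB_def)
  moreover have "map embed_zero (map restrict_zero b) = b"
    by (rule nth_equalityI) (use TB_length[OF b] zero embed_restrict_zero in auto)
  ultimately show ?thesis unfolding embedded_basis_def by force
qed

lemma lift_basis_vec:
  assumes c': "c' \<in> TB epsZ ls"
  shows "lift (basis_vec c') = basis_vec (map embed_zero c')"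
proof
  fix b
  show "lift (basis_vec c') b = basis_vec (map embed_zero c') b"
  proof (cases "b \<in> embedded_basis")
    case True
    then obtain c'' where c'': "c'' \<in> TB epsZ ls" "b = map embed_zero c''"
      by (auto simp: embedded_basis_def)
    then have "lift (basis_vec c') b = basis_vec c' c''"
      using True map_restrict_embed_zero by (simp add: lift_def)
    also have "\<dots> = basis_vec (map embed_zero c') b"
      using c'' map_embed_zero_eq_iff[OF c' c''(1)] by (auto simp: basis_vec_def)
    finally show ?thesis .
  next
    case False
    then have "b \<noteq> map embed_zero c'" using c' by (auto simp: embedded_basis_def)
    then show ?thesis using False by (simp add: lift_def basis_vec_def)
  qed
qed

lemma lift_lincomb: "lift (\<lambda>b'. \<Sum>q\<in>P. c q * f q b') = (\<lambda>b. \<Sum>q\<in>P. c q * lift (f q) b)"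
  by (auto simp: lift_def fun_eq_iff)

lemma lift_expand:
  "v' \<in> vecs epsZ ls \<Longrightarrow> lift v' = (\<lambda>b. \<Sum>c'\<in>TB epsZ ls. v' c' * basis_vec (map embed_zero c') b)"
proof -
  assume "v' \<in> vecs epsZ ls"
  then have "lift v' = lift (\<lambda>b'. \<Sum>c'\<in>TB epsZ ls. v' c' * basis_vec c' b')" using vecs_expand by metis
  also have "\<dots> = (\<lambda>b. \<Sum>c'\<in>TB epsZ ls. v' c' * lift (basis_vec c') b)" by (rule lift_lincomb)
  finally show ?thesis using lift_basis_vec by simp
qed

definition simulates :: "gen \<Rightarrow> gen list \<Rightarrow> bool" where
  "simulates g' gs \<longleftrightarrow>
     is_path k (zpos (gen_src M g')) gs \<and> gs \<noteq> []
     \<and> (\<forall>c\<in>set (butlast (path_visits k (zpos (gen_src M g')) gs)). one_pos c)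
     \<and> path_end k (zpos (gen_src M g')) gs = zpos (gen_tgt M g')
     \<and> (\<forall>g\<in>set gs. \<forall>p. k_factors r g p = k_factors r g' p)
     \<and> (\<forall>p<r. (\<Prod>g\<leftarrow>gs. loop_factor g (xs ! p)) = loop_factor g' (xs ! p))"

lemma act_word_embedded_basis_vec:
  assumes g': "is_ef M g'" and sim: "simulates g' gs" and c': "c' \<in> TB epsZ ls"
  defines "a \<equiv> gen_src M g'" and "t \<equiv> gen_tgt M g'"
  shows "act_word eps xs ls gs (basis_vec (map embed_zero c')) = (\<lambda>b. \<Sum>p<r.
    if 0 < (c' ! p) a \<and> b = map embed_zero (c'[p := move_token a t (c' ! p)])
    then ef_coeff epsZ xs ls g' p c' else 0)"
proof -
  have a: "a \<in> {1..M}" and t: "t \<in> {1..M}" and at: "a \<noteq> t"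
    using gen_src_tgt_range[OF g' two_le_zeros] by (auto simp: a_def t_def)
  have zat: "zpos a \<noteq> zpos t" using zpos_eq_iff[OF a t] at by simp
  have lc: "length c' = r" using TB_length[OF c'] by simp
  have path: "act_word eps xs ls gs (basis_vec (map embed_zero c')) = (\<lambda>b. \<Sum>p<r.
     if 0 < (map embed_zero c' ! p) (zpos a)
       \<and> b = (map embed_zero c')[p := move_token (zpos a) (zpos t) (map embed_zero c' ! p)]
     then (\<Prod>u\<in>k_factors r g' p. omega_eig eps (map embed_zero c' ! u) (zpos a)
                                / omega_eig eps (map embed_zero c' ! u) (zpos t))
        * (\<Prod>g\<leftarrow>gs. loop_factor g (xs ! p))
        * qq powi (int ((map embed_zero c' ! p) (zpos a)) - int ((map embed_zero c' ! p) (zpos t)) - 1)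
        * qint (int ((map embed_zero c' ! p) (zpos a)))
     else 0)"
    using sim a_def t_def
    by (intro act_word_path zero_pos_zpos a t zat map_embed_zero_TB[OF c'] allI impI
        embedded_basis_no_ones) (auto simp: simulates_def embedded_basis_def c')
  show ?thesis unfolding path
  proof (intro ext sum.cong refl)
    fix b p assume "p \<in> {..<r}"
    then have p: "p < r" by simp
    have factors: "(\<Prod>u\<in>k_factors r g' p. omega_eig eps (map embed_zero c' ! u) (zpos a)
        / omega_eig eps (map embed_zero c' ! u) (zpos t))
      = (\<Prod>u\<in>k_factors r g' p. omega_eig epsZ (c' ! u) a / omega_eig epsZ (c' ! u) t)"
      using k_factors_subset[OF g' p] lc omega_eig_embed_zero[OF a] omega_eig_embed_zero[OF t]
      by (intro prod.cong refl) auto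
    have "(map embed_zero c')[p := move_token (zpos a) (zpos t) (map embed_zero c' ! p)]
        = map embed_zero (c'[p := move_token a t (c' ! p)])"
      using p lc embed_zero_move_token[OF a t at] by (simp add: map_update)
    then show "(if 0 < (map embed_zero c' ! p) (zpos a)
        \<and> b = (map embed_zero c')[p := move_token (zpos a) (zpos t) (map embed_zero c' ! p)]
      then (\<Prod>u\<in>k_factors r g' p. omega_eig eps (map embed_zero c' ! u) (zpos a)
                                 / omega_eig eps (map embed_zero c' ! u) (zpos t))
        * (\<Prod>g\<leftarrow>gs. loop_factor g (xs ! p))
        * qq powi (int ((map embed_zero c' ! p) (zpos a)) - int ((map embed_zero c' ! p) (zpos t)) - 1)
        * qint (int ((map embed_zero c' ! p) (zpos a)))
      else 0)
      = (if 0 < (c' ! p) a \<and> b = map embed_zero (c'[p := move_token a t (c' ! p)])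
         then ef_coeff epsZ xs ls g' p c' else 0)"
      using sim p lc embed_zero_zpos[OF a] embed_zero_zpos[OF t]
      by (simp add: factors simulates_def ef_coeff_def Let_def a_def[symmetric] t_def[symmetric]
          mult.assoc)
  qed
qed

lemma lift_act_basis_vec:
  assumes g': "is_ef M g'" and c': "c' \<in> TB epsZ ls"
  defines "a \<equiv> gen_src M g'" and "t \<equiv> gen_tgt M g'"
  shows "lift (act epsZ xs ls g' (basis_vec c')) = (\<lambda>b. \<Sum>p<r.
    if 0 < (c' ! p) a \<and> b = map embed_zero (c'[p := move_token a t (c' ! p)])
    then ef_coeff epsZ xs ls g' p c' else 0)"
proof
  fix b
  have a: "a \<in> {1..M}" and t: "t \<in> {1..M}" and at: "a \<noteq> t"
    using gen_src_tgt_range[OF g' two_le_zeros] by (auto simp: a_def t_def)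
  have mv: "move_token a t (c' ! p) \<in> basisW epsZ (ls ! p)" if "p < r" "0 < (c' ! p) a" for p
  proof (rule move_token_basisW)
    show "c' ! p \<in> basisW epsZ (ls ! p)" using c' that(1) by (simp add: TB_def)
  qed (use that at t in auto)
  have moved: "c'[p := move_token a t (c' ! p)] \<in> TB epsZ ls" if "p < r" "0 < (c' ! p) a" for p
    using TB_list_update[OF c' that(1) mv[OF that]] .
  show "lift (act epsZ xs ls g' (basis_vec c')) b = (\<Sum>p<r.
    if 0 < (c' ! p) a \<and> b = map embed_zero (c'[p := move_token a t (c' ! p)])
    then ef_coeff epsZ xs ls g' p c' else 0)"
  proof (cases "b \<in> embedded_basis")
    case True
    then obtain c'' where c'': "c'' \<in> TB epsZ ls" "b = map embed_zero c''"
      by (auto simp: embedded_basis_def)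
    then have "lift (act epsZ xs ls g' (basis_vec c')) b = act epsZ xs ls g' (basis_vec c') c''"
      using True map_restrict_embed_zero by (simp add: lift_def)
    also have "\<dots> = (\<Sum>p<r. if 0 < (c' ! p) a \<and> b = map embed_zero (c'[p := move_token a t (c' ! p)])
        then ef_coeff epsZ xs ls g' p c' else 0)"
      unfolding act_ef_basis_vec[OF c' _ , of g', unfolded length_replicate, OF two_le_zeros g']
        a_def[symmetric] t_def[symmetric]
      using mv moved map_embed_zero_eq_iff[OF c''(1)] c''(2)
      by (intro sum.cong refl) auto
    finally show ?thesis .
  next
    case False
    then have "b \<noteq> map embed_zero (c'[p := move_token a t (c' ! p)])" if "p < r" "0 < (c' ! p) a" for p
      using moved[OF that] by (auto simp: embedded_basis_def)
    then have "(\<Sum>p<r. if 0 < (c' ! p) a \<and> b = map embed_zero (c'[p := move_token a t (c' ! p)])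
        then ef_coeff epsZ xs ls g' p c' else 0) = 0"
      by (intro sum.neutral) auto
    then show ?thesis using False by (simp add: lift_def)
  qed
qed

lemma lift_act_ef:
  assumes g': "is_ef M g'" and sim: "simulates g' gs" and v': "v' \<in> vecs epsZ ls"
  shows "lift (act epsZ xs ls g' v') = act_word eps xs ls gs (lift v')"
proof -
  have "lift (act epsZ xs ls g' v')
      = (\<lambda>b. \<Sum>c'\<in>TB epsZ ls. v' c' * lift (act epsZ xs ls g' (basis_vec c')) b)"
    by (subst act_expand) (rule lift_lincomb)
  also have "\<dots> = (\<lambda>b. \<Sum>c'\<in>TB epsZ ls. v' c' * act_word eps xs ls gs (basis_vec (map embed_zero c')) b)"
    using lift_act_basis_vec[OF g'] act_word_embedded_basis_vec[OF g' sim] by simp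
  also have "\<dots> = act_word eps xs ls gs (\<lambda>b. \<Sum>c'\<in>TB epsZ ls. v' c' * basis_vec (map embed_zero c') b)"
    by (rule act_word_lincomb[symmetric]) (rule finite_TB)
  also have "\<dots> = act_word eps xs ls gs (lift v')" using lift_expand[OF v'] by simp
  finally show ?thesis .
qed

lemma lift_act_diagonal:
  assumes j: "j \<in> {1..M}" and v': "v' \<in> vecs epsZ ls"
  shows lift_act_W: "lift (act epsZ xs ls (W j) v') = act eps xs ls (W (zpos j)) (lift v')"
    and lift_act_Winv: "lift (act epsZ xs ls (Winv j) v') = act eps xs ls (Winv (zpos j)) (lift v')"
proof -
  have lift_vecs: "lift v' \<in> vecs eps ls"
    using embedded_basis_subset_TB by (auto simp: lift_def vecs_def)
  have "weight b (zpos j) = weight (map restrict_zero b) j" if b: "b \<in> embedded_basis" for b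
  proof -
    obtain c' where "c' \<in> TB epsZ ls" "b = map embed_zero c'" using b by (auto simp: embedded_basis_def)
    then show ?thesis using map_restrict_embed_zero by (simp add: weight_def embed_zero_zpos[OF j])
  qed
  then show "lift (act epsZ xs ls (W j) v') = act eps xs ls (W (zpos j)) (lift v')"
    and "lift (act epsZ xs ls (Winv j) v') = act eps xs ls (Winv (zpos j)) (lift v')"
    unfolding act_W[OF v'] act_W[OF lift_vecs] act_Winv[OF v'] act_Winv[OF lift_vecs]
    using qpar_zpos[OF j] by (auto simp: lift_def)
qed

end

lemma E_segment_path:
  "1 \<le> a \<Longrightarrow> a \<le> b \<Longrightarrow> b \<le> k \<Longrightarrow>
    is_path k b (map E (rev [a..<b])) \<and> path_end k b (map E (rev [a..<b])) = a
    \<and> path_visits k b (map E (rev [a..<b])) = rev [a..<b]"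
proof (induction b)
  case (Suc b)
  then show ?case by (cases "a = Suc b") (auto simp: ia_def)
qed simp

lemma F_segment_path:
  "1 \<le> a \<Longrightarrow> a \<le> b \<Longrightarrow> b \<le> k \<Longrightarrow>
    is_path k a (map F [a..<b]) \<and> path_end k a (map F [a..<b]) = b
    \<and> path_visits k a (map F [a..<b]) = [Suc a..<Suc b]"
proof (induction b)
  case (Suc b)
  then show ?case
    by (cases "a = Suc b") (auto simp: ia_def is_path_append path_end_append path_visits_append)
qed simp

lemma loop_factor_prod_E: "\<forall>i\<in>set is. 0 < i \<Longrightarrow> (\<Prod>g\<leftarrow>map E is. loop_factor g x) = 1"
  by (induction "is") auto

lemma loop_factor_prod_F: "\<forall>i\<in>set is. 0 < i \<Longrightarrow> (\<Prod>g\<leftarrow>map F is. loop_factor g x) = 1"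
  by (induction "is") auto

context zero_embedding
begin

text \<open>The generator e_j of the purely even algebra moves a token from the (j+1)-th to the j-th
  zero of eps; path_E j does the same through the one-positions in between.  For j = 0 the
  path wraps around: from the first zero down to position 1, across e_0 to position k, and
  down to the last zero.  The paths for f_j run backwards.\<close>

definition path_E :: "nat \<Rightarrow> gen list" where
  "path_E j = (if j = 0 then map E (rev [1..<zpos 1]) @ [E 0] @ map E (rev [zpos M..<k])
               else map E (rev [zpos j..<zpos (Suc j)]))"

definition path_F :: "nat \<Rightarrow> gen list" where
  "path_F j = (if j = 0 then map F [zpos M..<k] @ [F 0] @ map F [1..<zpos 1]
               else map F [zpos j..<zpos (Suc j)])"

lemma zpos_first_last:
  "1 \<le> zpos 1" "zpos 1 \<le> k" "1 \<le> zpos M" "zpos M \<le> k" "zpos 1 < zpos M" "eps \<noteq> []"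
  using zpos_range[of 1] zpos_range[of M] zpos_less_iff[of 1 M] two_le_zeros two_le_length by auto

lemma simulates_E_inner:
  assumes j: "j \<in> {1..<M}"
  shows "simulates (E j) (path_E j)"
proof -
  have j1: "j \<in> {1..M}" and j2: "Suc j \<in> {1..M}" using j by auto
  have lt: "zpos j < zpos (Suc j)" using zpos_less_iff[OF j1 j2] by simp
  have gs: "path_E j = map E (rev [zpos j..<zpos (Suc j)])" using j by (simp add: path_E_def)
  have "is_path k (zpos (Suc j)) (path_E j) \<and> path_end k (zpos (Suc j)) (path_E j) = zpos j
      \<and> path_visits k (zpos (Suc j)) (path_E j) = rev [zpos j..<zpos (Suc j)]"
    unfolding gs using E_segment_path[of "zpos j" "zpos (Suc j)" k] zpos_range[OF j1] zpos_range[OF j2] lt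
    by simp
  moreover have "one_pos c" if "c \<in> {zpos j<..<zpos (Suc j)}" for c
    using one_pos_between[OF j] that by auto
  moreover have "(\<Prod>g\<leftarrow>path_E j. loop_factor g x) = 1" for x
    unfolding gs using zpos_range[OF j1] by (intro loop_factor_prod_E) auto
  ultimately show ?thesis using j lt by (auto simp: simulates_def gs ia_def)
qed

lemma simulates_E_wrap: "simulates (E 0) (path_E 0)"
proof -
  note z = zpos_first_last
  have gs: "path_E 0 = map E (rev [1..<zpos 1]) @ [E 0] @ map E (rev [zpos M..<k])"
    by (simp add: path_E_def)
  have "is_path k (zpos 1) (path_E 0)" and "path_end k (zpos 1) (path_E 0) = zpos M"
    and visits: "path_visits k (zpos 1) (path_E 0) = rev [1..<zpos 1] @ [k] @ rev [zpos M..<k]"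
    unfolding gs using E_segment_path[of 1 "zpos 1" k] E_segment_path[of "zpos M" k k] z two_le_length
    by (simp_all add: is_path_append path_end_append path_visits_append ia_def)
  moreover have "\<forall>c\<in>set (butlast (rev [1..<zpos 1] @ [k] @ rev [zpos M..<k])). one_pos c"
  proof (cases "zpos M = k")
    case False
    then have "butlast (rev [1..<zpos 1] @ [k] @ rev [zpos M..<k])
        = rev [1..<zpos 1] @ [k] @ rev [Suc (zpos M)..<k]"
      using z by (simp add: butlast_append)
    then show ?thesis using one_pos_below one_pos_above z False by auto
  qed (use one_pos_below in auto)
  moreover have "(\<Prod>g\<leftarrow>path_E 0. loop_factor g x) = x" for x
    unfolding gs using z loop_factor_prod_E[of "rev [1..<zpos 1]"] loop_factor_prod_E[of "rev [zpos M..<k]"]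
    by simp
  ultimately show ?thesis by (auto simp: simulates_def gs ia_def)
qed

lemma simulates_F_inner:
  assumes j: "j \<in> {1..<M}"
  shows "simulates (F j) (path_F j)"
proof -
  have j1: "j \<in> {1..M}" and j2: "Suc j \<in> {1..M}" using j by auto
  have lt: "zpos j < zpos (Suc j)" using zpos_less_iff[OF j1 j2] by simp
  have gs: "path_F j = map F [zpos j..<zpos (Suc j)]" using j by (simp add: path_F_def)
  have "is_path k (zpos j) (path_F j) \<and> path_end k (zpos j) (path_F j) = zpos (Suc j)
      \<and> path_visits k (zpos j) (path_F j) = [Suc (zpos j)..<Suc (zpos (Suc j))]"
    unfolding gs using F_segment_path[of "zpos j" "zpos (Suc j)" k] zpos_range[OF j1] zpos_range[OF j2] lt
    by simp
  moreover have "butlast [Suc (zpos j)..<Suc (zpos (Suc j))] = [Suc (zpos j)..<zpos (Suc j)]"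
    using lt by simp
  moreover have "one_pos c" if "c \<in> {zpos j<..<zpos (Suc j)}" for c
    using one_pos_between[OF j] that by auto
  moreover have "(\<Prod>g\<leftarrow>path_F j. loop_factor g x) = 1" for x
    unfolding gs using zpos_range[OF j1] by (intro loop_factor_prod_F) auto
  ultimately show ?thesis using j lt by (auto simp: simulates_def gs ia_def)
qed

lemma simulates_F_wrap: "simulates (F 0) (path_F 0)"
proof -
  note z = zpos_first_last
  have gs: "path_F 0 = map F [zpos M..<k] @ [F 0] @ map F [1..<zpos 1]"
    by (simp add: path_F_def)
  have "is_path k (zpos M) (path_F 0)" and "path_end k (zpos M) (path_F 0) = zpos 1"
    and "path_visits k (zpos M) (path_F 0) = [Suc (zpos M)..<Suc k] @ [1] @ [Suc 1..<Suc (zpos 1)]"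
    unfolding gs using F_segment_path[of "zpos M" k k] F_segment_path[of 1 "zpos 1" k] z two_le_length
    by (simp_all add: is_path_append path_end_append path_visits_append ia_def)
  moreover have "\<forall>c\<in>set (butlast ([Suc (zpos M)..<Suc k] @ [1] @ [Suc 1..<Suc (zpos 1)])). one_pos c"
  proof (cases "zpos 1 = 1")
    case False
    then have "butlast ([Suc (zpos M)..<Suc k] @ [1] @ [Suc 1..<Suc (zpos 1)])
        = [Suc (zpos M)..<Suc k] @ [1] @ [Suc 1..<zpos 1]"
      using z by (simp add: butlast_append)
    then show ?thesis using one_pos_below one_pos_above z False by auto
  qed (use one_pos_above in auto)
  moreover have "(\<Prod>g\<leftarrow>path_F 0. loop_factor g x) = inverse x" for x
    unfolding gs using z loop_factor_prod_F[of "[zpos M..<k]"] loop_factor_prod_F[of "[1..<zpos 1]"]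
    by simp
  ultimately show ?thesis by (auto simp: simulates_def gs ia_def)
qed

lemma simulates_paths:
  assumes "j < M"
  shows "simulates (E j) (path_E j)" and "simulates (F j) (path_F j)"
  using assms simulates_E_inner simulates_E_wrap simulates_F_inner simulates_F_wrap
  by (cases "j = 0"; force)+

end

context zero_embedding
begin

definition pullback :: "((nat \<Rightarrow> nat) list \<Rightarrow> K) set \<Rightarrow> ((nat \<Rightarrow> nat) list \<Rightarrow> K) set" where
  "pullback U = {v' \<in> vecs epsZ ls. lift v' \<in> U}"

lemma lift_act_in_submoduleT:
  assumes U: "submoduleT eps xs ls U" and g: "valid_gen M g"
    and v': "v' \<in> vecs epsZ ls" and lv': "lift v' \<in> U"
  shows "lift (act epsZ xs ls g v') \<in> U"
proof (cases g)
  case (E j)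
  then have "j < M" using g by (simp add: valid_gen_def)
  note sim = simulates_paths(1)[OF this]
  then have "act_word eps xs ls (path_E j) (lift v') \<in> U"
    using submoduleT_act_word[OF U _ lv'] is_path_valid_gen by (auto simp: simulates_def)
  then show ?thesis using E lift_act_ef[OF _ sim v'] \<open>j < M\<close> by simp
next
  case (F j)
  then have "j < M" using g by (simp add: valid_gen_def)
  note sim = simulates_paths(2)[OF this]
  then have "act_word eps xs ls (path_F j) (lift v') \<in> U"
    using submoduleT_act_word[OF U _ lv'] is_path_valid_gen by (auto simp: simulates_def)
  then show ?thesis using F lift_act_ef[OF _ sim v'] \<open>j < M\<close> by simp
next
  case (W j)
  then have "j \<in> {1..M}" using g by (simp add: valid_gen_def)
  then show ?thesis
    using W lift_act_W[OF _ v'] submoduleT_act[OF U lv'] zpos_range by (simp add: valid_gen_def)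
next
  case (Winv j)
  then have "j \<in> {1..M}" using g by (simp add: valid_gen_def)
  then show ?thesis
    using Winv lift_act_Winv[OF _ v'] submoduleT_act[OF U lv'] zpos_range by (simp add: valid_gen_def)
qed

lemma submoduleT_pullback:
  assumes U: "submoduleT eps xs ls U"
  shows "submoduleT epsZ xs ls (pullback U)"
proof -
  have "lift (\<lambda>_. 0) = (\<lambda>_. 0)"
    and "lift (\<lambda>b. u b + v b) = (\<lambda>b. lift u b + lift v b)"
    and "lift (\<lambda>b. c * u b) = (\<lambda>b. c * lift u b)" for u v c
    by (simp_all add: lift_def fun_eq_iff)
  then show ?thesis
    using submoduleT_zero[OF U] submoduleT_add[OF U] submoduleT_scale[OF U]
      lift_act_in_submoduleT[OF U] act_in_vecs
    by (auto simp: submoduleT_def pullback_def vecs_def)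
qed

text \<open>The target of the token moves; it has the right total only if M is at least
  l_1 + ... + l_r, which is where M must be large.\<close>

definition packed_weight :: "nat \<Rightarrow> nat" where
  "packed_weight c = (if c \<in> set (take (sum_list ls) (zero_positions eps)) then 1 else 0)"

lemma prefix_sum_packed_weight:
  assumes "sum_list ls \<le> M"
  shows "prefix_sum packed_weight k = sum_list ls"
proof -
  let ?B = "set (take (sum_list ls) (zero_positions eps))"
  have "?B \<subseteq> {1..k}" using set_zero_positions set_take_subset by (fastforce simp: zero_pos_def)
  then have "prefix_sum packed_weight k = card ?B"
    by (simp add: prefix_sum_def packed_weight_def sum.If_cases Int_absorb1)
  also have "\<dots> = sum_list ls"
    using assms sorted_zero_positions by (simp add: distinct_card strict_sorted_iff)
  finally show ?thesis .
qed

lemma packed_weight_embedded: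
  assumes b: "b \<in> TB eps ls" and w: "\<forall>c\<in>{1..k}. weight b c = packed_weight c"
  shows "b \<in> embedded_basis"
proof (rule embedded_basisI[OF b], intro allI impI)
  fix u c assume u: "u < r" and nz: "(b ! u) c \<noteq> 0"
  have c: "c \<in> {1..k}" using b u nz by (auto simp: TB_def basisW_def)
  have "(b ! u) c \<le> weight b c"
    unfolding weight_def using u TB_length[OF b] by (intro member_le_sum) auto
  then have "c \<in> set (zero_positions eps)"
    using w c nz by (auto simp: packed_weight_def dest: in_set_takeD split: if_splits)
  then show "zero_pos c" using set_zero_positions by auto
qed

lemma submoduleT_embedded_vector:
  assumes U: "submoduleT eps xs ls U" and u: "u \<in> U" "u \<noteq> (\<lambda>_. 0)" and L: "sum_list ls \<le> M"
  shows "\<exists>v'\<in>pullback U. v' \<noteq> (\<lambda>_. 0)"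
proof -
  obtain b0 where "u b0 \<noteq> 0" using u(2) by auto
  then obtain u1 where "u1 \<in> U" "u1 b0 \<noteq> 0" "\<forall>b. u1 b \<noteq> 0 \<longrightarrow> weight b = weight b0"
    using submoduleT_weight_component[OF U u(1)] by blast
  then obtain v b1 where v: "v \<in> U" "v b1 \<noteq> 0"
      and wv: "\<forall>b. v b \<noteq> 0 \<longrightarrow> (\<forall>c\<in>{1..k}. weight b c = packed_weight c)"
    using submoduleT_reach_weight[OF U _ prefix_sum_packed_weight[OF L]]
    by (metis (no_types, lifting) order.refl packed_weight_def zero_le_one)
  have supp: "v b \<noteq> 0 \<Longrightarrow> b \<in> embedded_basis" for b
    using packed_weight_embedded wv submoduleT_vecs[OF U v(1)] by (auto simp: vecs_def)
  define v' where "v' = (\<lambda>c'. if c' \<in> TB epsZ ls then v (map embed_zero c') else 0)"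
  have "lift v' = v"
  proof
    fix b
    show "lift v' b = v b"
    proof (cases "b \<in> embedded_basis")
      case True
      then obtain c' where "c' \<in> TB epsZ ls" "b = map embed_zero c'" by (auto simp: embedded_basis_def)
      then show ?thesis using True map_restrict_embed_zero by (simp add: lift_def v'_def)
    qed (use supp in \<open>auto simp: lift_def\<close>)
  qed
  then have "v' \<in> pullback U" using v(1) by (simp add: pullback_def v'_def vecs_def)
  moreover have "v' \<noteq> (\<lambda>_. 0)"
  proof
    assume "v' = (\<lambda>_. 0)"
    then have "lift v' = (\<lambda>_. 0)" by (simp add: lift_def)
    then show False using \<open>lift v' = v\<close> v(2) by simp
  qed
  ultimately show ?thesis by blast
qed

lemma irreducibleT_from_even:
  assumes irr: "irreducibleT epsZ xs ls" and L: "sum_list ls \<le> M"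
  shows "irreducibleT eps xs ls"
  unfolding irreducibleT_def
proof (intro conjI allI impI)
  have "vecs epsZ ls \<noteq> {\<lambda>_. 0}" and "(\<lambda>_. 0) \<in> vecs epsZ ls"
    using irr by (simp_all add: irreducibleT_def vecs_def)
  then obtain v' where "v' \<in> vecs epsZ ls" "v' \<noteq> (\<lambda>_. 0)" by blast
  then obtain c' where "v' c' \<noteq> 0" "v' \<in> vecs epsZ ls" by (auto simp: fun_eq_iff)
  then have "c' \<in> TB epsZ ls" by (auto simp: vecs_def)
  then have "map embed_zero c' \<in> TB eps ls" by (rule map_embed_zero_TB)
  then have "basis_vec (map embed_zero c') \<in> vecs eps ls" "basis_vec (map embed_zero c') \<noteq> (\<lambda>_. 0)"
    by (auto simp: vecs_def basis_vec_def fun_eq_iff)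
  then show "vecs eps ls \<noteq> {\<lambda>_. 0}" by blast
next
  fix U assume U: "submoduleT eps xs ls U"
  show "U = {\<lambda>_. 0} \<or> U = vecs eps ls"
  proof (cases "U = {\<lambda>_. 0}")
    case False
    then obtain u where "u \<in> U" "u \<noteq> (\<lambda>_. 0)" using submoduleT_zero[OF U] by blast
    then have "pullback U \<noteq> {\<lambda>_. 0}" using submoduleT_embedded_vector[OF U _ _ L] by blast
    then have pullback_all: "pullback U = vecs epsZ ls"
      using irr submoduleT_pullback[OF U] unfolding irreducibleT_def by blast
    have embedded: "basis_vec c \<in> U" if c: "c \<in> embedded_basis" for c
    proof -
      obtain c' where c': "c' \<in> TB epsZ ls" "c = map embed_zero c'"
        using c by (auto simp: embedded_basis_def)
      then have "basis_vec c' \<in> pullback U"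
        unfolding pullback_all by (auto simp: vecs_def basis_vec_def)
      then show ?thesis using lift_basis_vec[OF c'(1)] c'(2) by (simp add: pullback_def)
    qed
    have "\<forall>c. packed_weight c \<le> 1" by (simp add: packed_weight_def)
    then have "basis_vec c \<in> U" if "c \<in> TB eps ls" for c
      using basis_vecs_from_weight[OF U _ prefix_sum_packed_weight[OF L] _ that]
        packed_weight_embedded embedded by blast
    then show ?thesis using submoduleT_eq_vecsI[OF U] by blast
  qed simp
qed

end

theorem proposition5p5:
  fixes ls :: "nat list" and xs :: "K list"
  assumes "length xs = length ls"
    and "\<forall>x\<in>set xs. x \<noteq> 0"
  shows "\<exists>N. \<forall>eps :: nat list.
           4 \<le> length eps \<and> set eps \<subseteq> {0, 1} \<and> N \<le> nzeros eps
           \<and> irreducibleT (replicate (nzeros eps) 0) xs ls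
           \<longrightarrow> irreducibleT eps xs ls"
proof (intro exI[of _ "sum_list ls + 2"] allI impI)
  fix eps :: "nat list"
  assume h: "4 \<le> length eps \<and> set eps \<subseteq> {0, 1} \<and> sum_list ls + 2 \<le> nzeros eps
    \<and> irreducibleT (replicate (nzeros eps) 0) xs ls"
  then interpret zero_embedding eps xs ls
    using assms by unfold_locales (auto simp: nzeros_eq_length_zero_positions)
  show "irreducibleT eps xs ls"
    using irreducibleT_from_even h by (simp add: nzeros_eq_length_zero_positions)
qed

end
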